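(* Let $\alpha\in(0,1]$, $c>0$, $a>0$, $t>0$. Then $$\frac{N_t^{\alpha,c,a}[0,L]-L/a}{\sqrt{V_t^{\alpha,c,a}[L]}}$$ converges in distribution to a standard normal random variable as $L\to\infty$.
   Context: A symmetric $\alpha$-stable process with parameters $\alpha$, $c>0$ is a Lévy process $(X(t))_{t\ge0}$ on $\mathbb{R}$ with $X(0)=0$ and $\mathbb{E}[e^{i\theta X(t)}]=\exp(-tc|\theta|^\alpha)$. Let $(X_j)_{j\in\mathbb{Z}}$ be independent copies, $\epsilon\sim\mathrm{Uniform}[0,1]$ independent of them, and $u_j=a(j-\epsilon)$. Define $N_t^{\alpha,c,a}[0,L]=\sum_{j\in\mathbb{Z}}\mathbb{I}[X_j(t)+u_j\in[0,L]]$ and the number variance $V_t^{\alpha,c,a}[L]=\mathrm{Var}(N_t^{\alpha,c,a}[0,L])$. *)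

theory Defs
  imports "HOL-Probability.Probability"
begin

definition sym_stable_levy :: "'a measure \<Rightarrow> (real \<Rightarrow> 'a \<Rightarrow> real) \<Rightarrow> real \<Rightarrow> real \<Rightarrow> bool" where
  "sym_stable_levy M X \<alpha> c \<longleftrightarrow>
     prob_space M \<and>
     (\<forall>s. X s \<in> borel_measurable M) \<and>
     (\<forall>\<omega>\<in>space M. X 0 \<omega> = 0) \<and>
     (\<forall>(\<tau>::nat \<Rightarrow> real) n. (\<forall>k<n. 0 \<le> \<tau> k \<and> \<tau> k \<le> \<tau> (Suc k)) \<longrightarrow>
         prob_space.indep_vars M (\<lambda>_. borel) (\<lambda>k \<omega>. X (\<tau> (Suc k)) \<omega> - X (\<tau> k) \<omega>) {..<n}) \<and>
     (\<forall>s h. 0 \<le> s \<longrightarrow> 0 \<le> h \<longrightarrow>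
         distr M borel (\<lambda>\<omega>. X (s + h) \<omega> - X s \<omega>) = distr M borel (X h)) \<and>
     (\<forall>s\<ge>0. \<forall>\<theta>. char (distr M borel (X s)) \<theta> = complex_of_real (exp (- (s * c * \<bar>\<theta>\<bar> powr \<alpha>))))"

text \<open>N_t[0,L] = sum over j of the indicator of X_j(t) + a(j - eps) in [0,L]
(a.s. finitely many terms; rendered as the cardinality of the set of such j).\<close>
definition count_N :: "(int \<Rightarrow> real \<Rightarrow> 'a \<Rightarrow> real) \<Rightarrow> ('a \<Rightarrow> real) \<Rightarrow> real \<Rightarrow> real \<Rightarrow> real \<Rightarrow> 'a \<Rightarrow> real" where
  "count_N X \<epsilon> a t L \<omega> = real (card {j::int. X j t \<omega> + a * (real_of_int j - \<epsilon> \<omega>) \<in> {0..L}})"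

definition number_variance :: "'a measure \<Rightarrow> (int \<Rightarrow> real \<Rightarrow> 'a \<Rightarrow> real) \<Rightarrow> ('a \<Rightarrow> real) \<Rightarrow> real \<Rightarrow> real \<Rightarrow> real \<Rightarrow> real" where
  "number_variance M X \<epsilon> a t L =
     (LINT \<omega>|M. (count_N X \<epsilon> a t L \<omega> - (LINT \<omega>'|M. count_N X \<epsilon> a t L \<omega>'))\<^sup>2)"

end

theory Submission
  imports Defs
begin

(* Condition on the shift: for fixed e the events "site j lands in [0, L]" are independent, with
   probabilities p_j(e) = mu {x. x + a (j - e) in [0, L]}, mu the law of X_j(t).  So the characteristic
   function of N is an average over e of products of Bernoulli characteristic functions, and replacing each
   factor by a Gaussian one costs |u|^3 p_j (1 - p_j).  Counting lattice points gives
   sum_j p_j(e) = L/a + O(1) and sum_j p_j(e)^2 = (1/a) E max(0, L - |X - X'|) + O(1) with X, X' independent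
   of law mu, hence V[L] = (1/a) E min(L, |X - X'|) + O(1).  For alpha <= 1 the law mu has no first moment
   (its characteristic function exp (- t c |theta|^alpha) is not differentiable at 0), so V[L] tends to
   infinity by monotone convergence, and with u = theta / sqrt V[L] all error terms vanish. *)

section \<open>Characteristic functions of Bernoulli sums\<close>

lemma exp_neg_approx:
  fixes w :: real assumes "0 \<le> w"
  shows "\<bar>exp (- w) - (1 - w)\<bar> \<le> w\<^sup>2 / 2"
proof -
  let ?f = "\<lambda>x::real. 1 - x + x\<^sup>2 / 2 - exp (- x)"
  have "?f 0 \<le> ?f w"
  proof (rule DERIV_nonneg_imp_increasing_open[OF assms])
    fix x :: real
    have "DERIV ?f x :> (- 1 + x + exp (- x))"
      by (auto intro!: derivative_eq_intros)
    moreover have "0 \<le> - 1 + x + exp (- x)"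
      using exp_ge_add_one_self[of "- x"] by linarith
    ultimately show "\<exists>y. DERIV ?f x :> y \<and> 0 \<le> y" by blast
  qed (auto intro!: continuous_intros)
  then show ?thesis
    using exp_ge_add_one_self[of "- w"] by (simp add: abs_if)
qed

lemma abs_exp_neg_diff_le:
  fixes x y :: real assumes "0 \<le> x" "0 \<le> y"
  shows "\<bar>exp (- x) - exp (- y)\<bar> \<le> \<bar>x - y\<bar>"
proof -
  have *: "exp (- x) - exp (- y) \<le> y - x" if "0 \<le> x" "x \<le> y" for x y :: real
  proof -
    have "exp (- x) - exp (- y) = exp (- x) * (1 - exp (x - y))"
      by (simp add: algebra_simps flip: exp_add)
    also have "\<dots> \<le> 1 - exp (x - y)"
      using that by (intro mult_left_le_one_le) auto
    also have "\<dots> \<le> y - x"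
      using exp_ge_add_one_self[of "x - y"] by linarith
    finally show ?thesis .
  qed
  show ?thesis
    using *[of x y] *[of y x] assms by (cases "x \<le> y") auto
qed

lemma iexp_approx_quadratic: "cmod (iexp x - (1 + \<i> * x - x\<^sup>2 / 2)) \<le> \<bar>x\<bar> ^ 3 / 6"
proof -
  have "(\<Sum>k \<le> 2. (\<i> * x) ^ k / fact k) = 1 + \<i> * x - x\<^sup>2 / 2"
    by (simp add: numeral_2_eq_2 power2_eq_square mult.assoc mult.left_commute complex_i_mult_minus)
  moreover have "(fact 3 :: real) = 6"
    by (simp add: numeral_3_eq_3 numeral_2_eq_2)
  ultimately show ?thesis
    using iexp_approx1[of x 2] by (simp add: numeral_3_eq_3)
qed

lemma norm_iexp_diff_le: "cmod (iexp x - iexp y) \<le> \<bar>x - y\<bar>"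
proof -
  have "cmod (iexp (x - y) - 1) \<le> \<bar>x - y\<bar>"
    using iexp_approx1[of "x - y" 0] by simp
  moreover have "iexp x - iexp y = iexp y * (iexp (x - y) - 1)"
    by (simp add: algebra_simps flip: exp_add)
  ultimately show ?thesis by (simp add: norm_mult)
qed

lemma norm_bernoulli_char_le_1:
  fixes p :: real assumes "0 \<le> p" "p \<le> 1"
  shows "cmod (1 + p * (iexp u - 1)) \<le> 1"
proof -
  have n: "cmod (1 - complex_of_real p) = 1 - p"
    using assms by (metis abs_of_nonneg diff_ge_0_iff_ge norm_of_real of_real_1 of_real_diff)
  have "1 + complex_of_real p * (iexp u - 1) = complex_of_real (1 - p) + complex_of_real p * iexp u"
    by (simp add: algebra_simps)
  also have "cmod \<dots> \<le> cmod (complex_of_real (1 - p)) + cmod (complex_of_real p * iexp u)"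
    by (rule norm_triangle_ineq)
  also have "\<dots> = 1"
    using assms n by (simp add: norm_mult)
  finally show ?thesis .
qed

lemma bernoulli_char_taylor:
  fixes p u :: real assumes p: "0 \<le> p" "p \<le> 1"
  shows "cmod ((1 + p * (iexp u - 1)) * iexp (- (u * p)) - (1 - u\<^sup>2 * (p * (1 - p)) / 2))
           \<le> \<bar>u\<bar> ^ 3 * (p * (1 - p)) / 6"
proof -
  define x1 where "x1 = - (u * p)"
  define x2 where "x2 = u * (1 - p)"
  define R1 where "R1 = iexp x1 - (1 + \<i> * x1 - x1\<^sup>2 / 2)"
  define R2 where "R2 = iexp x2 - (1 + \<i> * x2 - x2\<^sup>2 / 2)"
  have "iexp u * iexp (- (u * p)) = iexp x2"
    by (simp add: x2_def algebra_simps flip: exp_add)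
  then have "(1 + p * (iexp u - 1)) * iexp (- (u * p)) = (1 - p) * iexp x1 + p * iexp x2"
    by (simp add: x1_def algebra_simps)
  also have "\<dots> = 1 - u\<^sup>2 * (p * (1 - p)) / 2 + ((1 - p) * R1 + p * R2)"
    unfolding R1_def R2_def x1_def x2_def by (simp add: field_simps power2_eq_square)
  finally have split: "(1 + p * (iexp u - 1)) * iexp (- (u * p)) - (1 - u\<^sup>2 * (p * (1 - p)) / 2)
      = (1 - p) * R1 + p * R2" by simp
  have R1: "cmod R1 \<le> \<bar>u\<bar> ^ 3 * p ^ 3 / 6"
    using iexp_approx_quadratic[of x1] p by (simp add: R1_def x1_def abs_mult power_mult_distrib)
  have R2: "cmod R2 \<le> \<bar>u\<bar> ^ 3 * (1 - p) ^ 3 / 6"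
    using iexp_approx_quadratic[of x2] p by (simp add: R2_def x2_def abs_mult power_mult_distrib)
  have "cmod (1 - complex_of_real p) = 1 - p"
    using p by (metis abs_of_nonneg diff_ge_0_iff_ge norm_of_real of_real_1 of_real_diff)
  then have "cmod ((1 - p) * R1 + p * R2) \<le> (1 - p) * cmod R1 + p * cmod R2"
    using p norm_triangle_ineq[of "(1 - p) * R1" "p * R2"] by (simp add: norm_mult)
  also have "\<dots> \<le> (1 - p) * (\<bar>u\<bar> ^ 3 * p ^ 3 / 6) + p * (\<bar>u\<bar> ^ 3 * (1 - p) ^ 3 / 6)"
    using p R1 R2 by (intro add_mono mult_left_mono) auto
  also have "\<dots> = \<bar>u\<bar> ^ 3 * ((1 - p) * p ^ 3 + p * (1 - p) ^ 3) / 6"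
    by (simp add: field_simps)
  also have "(1 - p) * p ^ 3 + p * (1 - p) ^ 3 = (p * (1 - p)) * (1 - 2 * (p * (1 - p)))"
    by (simp add: power3_eq_cube algebra_simps)
  also have "\<bar>u\<bar> ^ 3 * \<dots> / 6 \<le> \<bar>u\<bar> ^ 3 * (p * (1 - p)) / 6"
    using p by (intro divide_right_mono mult_left_mono mult_left_le) auto
  finally show ?thesis unfolding split .
qed
lemma bernoulli_char_gaussian_approx:
  fixes p u :: real assumes p: "0 \<le> p" "p \<le> 1" and u: "\<bar>u\<bar> \<le> 1"
  shows "cmod ((1 + p * (iexp u - 1)) * iexp (- (u * p)) - exp (- (u\<^sup>2 * (p * (1 - p)) / 2)))
           \<le> \<bar>u\<bar> ^ 3 * (p * (1 - p))"
proof -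
  define v where "v = p * (1 - p)"
  define w where "w = u\<^sup>2 * v / 2"
  have "v = 1 / 4 - (2 * p - 1)\<^sup>2 / 4"
    by (simp add: v_def power2_eq_square field_simps)
  moreover have "0 \<le> v"
    using p by (simp add: v_def)
  ultimately have v: "0 \<le> v" "v \<le> 1 / 4"
    by simp_all
  have "w\<^sup>2 / 2 = (u\<^sup>2 * u\<^sup>2) * (v * v) / 8"
    by (simp add: w_def power2_eq_square)
  also have "\<dots> \<le> \<bar>u\<bar> ^ 3 * (v / 4) / 8"
  proof -
    have "u\<^sup>2 * u\<^sup>2 = \<bar>u\<bar> * \<bar>u\<bar> ^ 3"
      by (simp add: power2_eq_square power3_eq_cube)
    also have "\<dots> \<le> \<bar>u\<bar> ^ 3"
      using u by (simp add: mult_left_le_one_le)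
    finally show ?thesis
      using v mult_left_mono[OF v(2) v(1)] by (intro divide_right_mono mult_mono) auto
  qed
  finally have exp_err: "\<bar>exp (- w) - (1 - w)\<bar> \<le> \<bar>u\<bar> ^ 3 * v / 32"
    using exp_neg_approx[of w] v by (simp add: w_def)
  have "cmod (complex_of_real (exp (- w)) - (1 - w)) = \<bar>exp (- w) - (1 - w)\<bar>"
    by (metis norm_of_real of_real_1 of_real_diff)
  then have "cmod ((1 + p * (iexp u - 1)) * iexp (- (u * p)) - exp (- w))
      \<le> cmod ((1 + p * (iexp u - 1)) * iexp (- (u * p)) - (1 - w)) + \<bar>exp (- w) - (1 - w)\<bar>"
    using norm_triangle_ineq4[of "(1 + p * (iexp u - 1)) * iexp (- (u * p)) - (1 - w)"
        "complex_of_real (exp (- w)) - (1 - w)"]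
    by simp
  also have "\<dots> \<le> \<bar>u\<bar> ^ 3 * v / 6 + \<bar>u\<bar> ^ 3 * v / 32"
    using bernoulli_char_taylor[OF p, of u] exp_err unfolding w_def v_def by (intro add_mono) simp_all
  also have "\<dots> \<le> \<bar>u\<bar> ^ 3 * v"
    using v by simp
  finally show ?thesis by (simp add: w_def v_def)
qed

lemma bernoulli_sum_char_gaussian_approx:
  fixes p :: "'i \<Rightarrow> real"
  assumes T: "finite T" and p: "\<And>j. 0 \<le> p j" "\<And>j. p j \<le> 1" and u: "\<bar>u\<bar> \<le> 1"
  shows "cmod ((\<Prod>j\<in>T. 1 + p j * (iexp u - 1)) * iexp (- (u * (\<Sum>j\<in>T. p j)))
            - exp (- (u\<^sup>2 * (\<Sum>j\<in>T. p j * (1 - p j)) / 2)))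
         \<le> \<bar>u\<bar> ^ 3 * (\<Sum>j\<in>T. p j * (1 - p j))"
proof -
  let ?A = "\<lambda>j. (1 + p j * (iexp u - 1)) * iexp (- (u * p j))"
  let ?B = "\<lambda>j. complex_of_real (exp (- (u\<^sup>2 * (p j * (1 - p j)) / 2)))"
  have "iexp (- (u * (\<Sum>j\<in>T. p j))) = (\<Prod>j\<in>T. iexp (- (u * p j)))"
    using T by (simp add: exp_sum[symmetric] sum_negf sum_distrib_left)
  then have "(\<Prod>j\<in>T. 1 + p j * (iexp u - 1)) * iexp (- (u * (\<Sum>j\<in>T. p j))) = (\<Prod>j\<in>T. ?A j)"
    by (simp add: prod.distrib)
  moreover have "exp (- (u\<^sup>2 * (\<Sum>j\<in>T. p j * (1 - p j)) / 2))
      = (\<Prod>j\<in>T. exp (- (u\<^sup>2 * (p j * (1 - p j)) / 2)))"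
    using T by (simp add: exp_sum[symmetric] sum_negf sum_distrib_left sum_divide_distrib)
  moreover have "cmod ((\<Prod>j\<in>T. ?A j) - (\<Prod>j\<in>T. ?B j)) \<le> (\<Sum>j\<in>T. cmod (?A j - ?B j))"
    using norm_bernoulli_char_le_1[OF p] p by (intro norm_prod_diff) (auto simp: norm_mult)
  moreover have "\<dots> \<le> (\<Sum>j\<in>T. \<bar>u\<bar> ^ 3 * (p j * (1 - p j)))"
    by (intro sum_mono bernoulli_char_gaussian_approx p u)
  ultimately show ?thesis
    by (simp add: sum_distrib_left)
qed

lemma bernoulli_sum_char_normal_approx:
  fixes p :: "'i \<Rightarrow> real" and K \<theta> u :: real
  assumes T: "finite T" and p: "\<And>j. 0 \<le> p j" "\<And>j. p j \<le> 1" and u: "\<bar>u\<bar> \<le> 1"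
  defines "m \<equiv> \<Sum>j\<in>T. p j" and "s \<equiv> \<Sum>j\<in>T. p j * (1 - p j)"
  shows "cmod (iexp (- (u * K)) * (\<Prod>j\<in>T. 1 + p j * (iexp u - 1)) - exp (- (\<theta>\<^sup>2 / 2)))
     \<le> \<bar>u\<bar> ^ 3 * s + \<bar>u\<bar> * \<bar>m - K\<bar> + \<bar>u\<^sup>2 * s - \<theta>\<^sup>2\<bar> / 2"
proof -
  let ?P = "\<Prod>j\<in>T. 1 + p j * (iexp u - 1)"
  let ?G = "complex_of_real (exp (- (u\<^sup>2 * s / 2)))"
  let ?E = "complex_of_real (exp (- (\<theta>\<^sup>2 / 2)))"
  have s: "0 \<le> u\<^sup>2 * s"
    unfolding s_def using p by (intro mult_nonneg_nonneg sum_nonneg) auto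
  have "iexp (u * (m - K)) * iexp (- (u * m)) = iexp (- (u * K))"
    by (simp add: algebra_simps flip: exp_add)
  then have split: "iexp (- (u * K)) * ?P - ?E
     = iexp (u * (m - K)) * (?P * iexp (- (u * m)) - ?G) + (iexp (u * (m - K)) - 1) * ?G + (?G - ?E)"
    by (simp add: algebra_simps)
  have n1: "cmod (iexp (u * (m - K)) * (?P * iexp (- (u * m)) - ?G)) \<le> \<bar>u\<bar> ^ 3 * s"
    using bernoulli_sum_char_gaussian_approx[OF T p u] by (simp add: norm_mult m_def s_def)
  have "cmod (iexp (u * (m - K)) - iexp 0) * cmod ?G \<le> \<bar>u * (m - K) - 0\<bar> * 1"
    using s norm_iexp_diff_le[of "u * (m - K)" 0] by (intro mult_mono) auto
  then have n2: "cmod ((iexp (u * (m - K)) - 1) * ?G) \<le> \<bar>u\<bar> * \<bar>m - K\<bar>"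
    by (simp add: norm_mult abs_mult)
  have "cmod (?G - ?E) = \<bar>exp (- (u\<^sup>2 * s / 2)) - exp (- (\<theta>\<^sup>2 / 2))\<bar>"
    by (metis norm_of_real of_real_diff)
  also have "\<dots> \<le> \<bar>u\<^sup>2 * s / 2 - \<theta>\<^sup>2 / 2\<bar>"
    using s by (intro abs_exp_neg_diff_le) auto
  finally have n3: "cmod (?G - ?E) \<le> \<bar>u\<^sup>2 * s - \<theta>\<^sup>2\<bar> / 2"
    by (simp add: diff_divide_distrib[symmetric])
  show ?thesis
    unfolding split
    using norm_triangle_ineq[of "iexp (u * (m - K)) * (?P * iexp (- (u * m)) - ?G)
        + (iexp (u * (m - K)) - 1) * ?G" "?G - ?E"]
      norm_triangle_ineq[of "iexp (u * (m - K)) * (?P * iexp (- (u * m)) - ?G)"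
        "(iexp (u * (m - K)) - 1) * ?G"] n1 n2 n3
    by linarith
qed

(* The right-hand side of bernoulli_sum_char_normal_approx, in terms of m = \<Sum> p j and q = \<Sum> (p j)\<^sup>2. *)
definition char_error :: "real \<Rightarrow> real \<Rightarrow> real \<Rightarrow> real \<Rightarrow> real \<Rightarrow> real" where
  "char_error u \<theta> K m q = \<bar>u\<bar> ^ 3 * (m - q) + \<bar>u\<bar> * \<bar>m - K\<bar> + \<bar>u\<^sup>2 * (m - q) - \<theta>\<^sup>2\<bar> / 2"

lemma measurable_char_error [measurable]:
  assumes [measurable]: "f \<in> borel_measurable N" "g \<in> borel_measurable N"
  shows "(\<lambda>x. char_error u \<theta> K (f x) (g x)) \<in> borel_measurable N"
  unfolding char_error_def by measurable

lemma (in prob_space) integrable_abs_le_const: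
  fixes f :: "'a \<Rightarrow> real"
  assumes "f \<in> borel_measurable M" "\<And>x. x \<in> space M \<Longrightarrow> \<bar>f x\<bar> \<le> B"
  shows "integrable M f"
  using assms by (intro integrable_const_bound[where B = B]) auto

lemma (in prob_space) abs_integral_le_const:
  fixes f :: "'a \<Rightarrow> real"
  assumes "f \<in> borel_measurable M" "\<And>x. x \<in> space M \<Longrightarrow> \<bar>f x\<bar> \<le> B"
  shows "\<bar>integral\<^sup>L M f\<bar> \<le> B"
proof -
  have "\<bar>integral\<^sup>L M f\<bar> \<le> integral\<^sup>L M (\<lambda>x. \<bar>f x\<bar>)"
    by (rule integral_abs_bound)
  also have "\<dots> \<le> B"
    using assms by (intro integral_le_const integrable_abs_le_const[of _ B]) auto
  finally show ?thesis .
qed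

lemma (in prob_space) abs_integral_diff_le_const:
  fixes f g :: "'a \<Rightarrow> real"
  assumes "integrable M f" "integrable M g" "\<And>x. x \<in> space M \<Longrightarrow> \<bar>f x - g x\<bar> \<le> C"
  shows "\<bar>integral\<^sup>L M f - integral\<^sup>L M g\<bar> \<le> C"
  using assms abs_integral_le_const[of "\<lambda>x. f x - g x" C] by simp

lemma SUP_ennreal_min: "(SUP n::nat. ennreal (min (real n) d)) = ennreal d"
proof (rule antisym)
  show "(SUP n::nat. ennreal (min (real n) d)) \<le> ennreal d"
    by (rule SUP_least) (auto intro: ennreal_leI)
  have "ennreal d = ennreal (min (real (nat \<lceil>d\<rceil>)) d)"
    by (simp add: min_def) linarith
  also have "\<dots> \<le> (SUP n::nat. ennreal (min (real n) d))"
    by (rule SUP_upper) simp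
  finally show "ennreal d \<le> (SUP n::nat. ennreal (min (real n) d))" .
qed

lemma nn_integral_SUP_min:
  assumes [measurable]: "f \<in> borel_measurable N"
  shows "(SUP n::nat. \<integral>\<^sup>+x. ennreal (min (real n) (f x)) \<partial>N) = (\<integral>\<^sup>+x. ennreal (f x) \<partial>N)"
proof -
  have "incseq (\<lambda>n x. ennreal (min (real n) (f x)))"
    by (intro incseq_SucI le_funI ennreal_leI) auto
  then show ?thesis
    by (simp add: nn_integral_monotone_convergence_SUP[symmetric] SUP_ennreal_min)
qed

lemma (in prob_space) second_moment_gap_bounds:
  fixes f :: "'a \<Rightarrow> real"
  assumes [measurable]: "f \<in> borel_measurable M" and close: "\<And>x. x \<in> space M \<Longrightarrow> \<bar>f x - K\<bar> \<le> 1"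
  shows "0 \<le> expectation (\<lambda>x. (f x)\<^sup>2) - (expectation f)\<^sup>2"
    and "expectation (\<lambda>x. (f x)\<^sup>2) - (expectation f)\<^sup>2 \<le> 1"
proof -
  have bound: "\<bar>f x\<bar> \<le> \<bar>K\<bar> + 1" if "x \<in> space M" for x
    using close[OF that] by linarith
  have int: "integrable M f" "integrable M (\<lambda>x. (f x)\<^sup>2)"
    using bound power_mono[OF bound abs_ge_zero, of _ 2]
    by (auto intro: integrable_abs_le_const[where B = "(\<bar>K\<bar> + 1)\<^sup>2"] integrable_abs_le_const[where B = "\<bar>K\<bar> + 1"])
  have shift: "expectation (\<lambda>x. (f x - c)\<^sup>2) = expectation (\<lambda>x. (f x)\<^sup>2) - 2 * c * expectation f + c\<^sup>2" for c
  proof -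
    have "(\<lambda>x. (f x - c)\<^sup>2) = (\<lambda>x. (f x)\<^sup>2 - (2 * c) * f x + c\<^sup>2)"
      by (simp add: power2_eq_square algebra_simps)
    then show ?thesis
      using int by (simp add: prob_space)
  qed
  have "0 \<le> expectation (\<lambda>x. (f x - expectation f)\<^sup>2)"
    by (intro integral_nonneg_AE) simp
  then show "0 \<le> expectation (\<lambda>x. (f x)\<^sup>2) - (expectation f)\<^sup>2"
    unfolding shift by (simp add: power2_eq_square)
  have "expectation (\<lambda>x. (f x - K)\<^sup>2) \<le> 1"
    using close power_mono[OF close abs_ge_zero, of _ 2]
    by (intro integral_le_const integrable_abs_le_const[where B = 1]) auto
  then show "expectation (\<lambda>x. (f x)\<^sup>2) - (expectation f)\<^sup>2 \<le> 1"
    unfolding shift using zero_le_power2[of "expectation f - K"]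
    by (simp add: power2_eq_square algebra_simps)
qed

lemma (in prob_space) char_distr_normalized:
  fixes X :: "'a \<Rightarrow> real"
  assumes [measurable]: "X \<in> borel_measurable M" and "s \<noteq> 0"
  shows "char (distr M borel (\<lambda>\<omega>. (X \<omega> - K) / s)) \<theta>
    = iexp (- (\<theta> / s * K)) * (\<integral>\<omega>. iexp (\<theta> / s * X \<omega>) \<partial>M)"
proof -
  have "iexp (\<theta> * ((X \<omega> - K) / s)) = iexp (- (\<theta> / s * K)) * iexp (\<theta> / s * X \<omega>)" for \<omega>
    using assms(2) by (simp add: algebra_simps diff_divide_distrib flip: exp_add)
  then show ?thesis
    unfolding char_def by (simp add: integral_distr)
qed

section \<open>Laws without first moment\<close>

lemma (in real_distribution) one_minus_Re_char_le:
  assumes "integrable M (\<lambda>x. x)"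
  shows "1 - Re (char M \<theta>) \<le> \<bar>\<theta>\<bar> / 2 * expectation (\<lambda>x. min (4 * \<bar>x\<bar>) (\<bar>\<theta>\<bar> * x\<^sup>2))"
proof -
  have moments: "integrable M (\<lambda>x. x ^ k)" if "k \<le> 1" for k
    using that assms by (cases k) auto
  have "1 - Re (char M \<theta>) = Re ((1 + \<i> * \<theta> * expectation (\<lambda>x. x)) - char M \<theta>)"
    by simp
  also have "\<dots> \<le> cmod (char M \<theta> - (1 + \<i> * \<theta> * expectation (\<lambda>x. x)))"
    by (metis abs_Re_le_cmod abs_le_iff minus_diff_eq norm_minus_commute)
  also have "\<dots> \<le> \<bar>\<theta>\<bar> / 2 * expectation (\<lambda>x. min (2 * \<bar>x\<bar> ^ 1 * real (Suc 1)) (\<bar>\<theta>\<bar> * \<bar>x\<bar> ^ Suc 1))"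
    using char_approx2[of 1 \<theta>, OF moments] prob_space by (simp add: space_eq_univ)
  finally show ?thesis
    by (simp add: power2_eq_square)
qed

lemma (in real_distribution) one_minus_Re_char_over_tendsto_0:
  assumes int: "integrable M (\<lambda>x. x)" and \<theta>: "\<theta> \<longlonglongrightarrow> 0" "\<And>n. 0 < \<theta> n"
  shows "(\<lambda>n. (1 - Re (char M (\<theta> n))) / \<theta> n) \<longlonglongrightarrow> 0"
proof (rule tendsto_sandwich[where f = "\<lambda>_. 0"
      and h = "\<lambda>n. 1 / 2 * expectation (\<lambda>x. min (4 * \<bar>x\<bar>) (\<theta> n * x\<^sup>2))"])
  have "(\<lambda>n. expectation (\<lambda>x. min (4 * \<bar>x\<bar>) (\<theta> n * x\<^sup>2))) \<longlonglongrightarrow> expectation (\<lambda>x. 0)"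
  proof (rule integral_dominated_convergence[where w = "\<lambda>x. 4 * \<bar>x\<bar>"])
    show "integrable M (\<lambda>x. 4 * \<bar>x\<bar>)"
      using int by auto
    show "AE x in M. (\<lambda>n. min (4 * \<bar>x\<bar>) (\<theta> n * x\<^sup>2)) \<longlonglongrightarrow> 0"
    proof (rule AE_I2)
      fix x
      show "(\<lambda>n. min (4 * \<bar>x\<bar>) (\<theta> n * x\<^sup>2)) \<longlonglongrightarrow> 0"
      proof (rule tendsto_sandwich[where f = "\<lambda>_. 0" and h = "\<lambda>n. \<theta> n * x\<^sup>2"])
        show "\<forall>\<^sub>F n in sequentially. 0 \<le> min (4 * \<bar>x\<bar>) (\<theta> n * x\<^sup>2)"
          using \<theta>(2) by (simp add: less_imp_le)
        show "(\<lambda>n. \<theta> n * x\<^sup>2) \<longlonglongrightarrow> 0"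
          using tendsto_mult_left_zero[OF \<theta>(1)] .
      qed simp_all
    qed
    show "AE x in M. norm (min (4 * \<bar>x\<bar>) (\<theta> n * x\<^sup>2)) \<le> 4 * \<bar>x\<bar>" for n
      using \<theta>(2)[of n] by (intro AE_I2) (simp add: abs_le_iff)
  qed simp_all
  then show "(\<lambda>n. 1 / 2 * expectation (\<lambda>x. min (4 * \<bar>x\<bar>) (\<theta> n * x\<^sup>2))) \<longlonglongrightarrow> 0"
    using tendsto_mult_right_zero by simp
  show "\<forall>\<^sub>F n in sequentially. 0 \<le> (1 - Re (char M (\<theta> n))) / \<theta> n"
  proof (intro always_eventually allI)
    fix n
    have "Re (char M (\<theta> n)) \<le> 1"
      using abs_Re_le_cmod[of "char M (\<theta> n)"] cmod_char_le_1[of "\<theta> n"] by linarith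
    then show "0 \<le> (1 - Re (char M (\<theta> n))) / \<theta> n"
      using \<theta>(2)[of n] by simp
  qed
  show "\<forall>\<^sub>F n in sequentially.
      (1 - Re (char M (\<theta> n))) / \<theta> n \<le> 1 / 2 * expectation (\<lambda>x. min (4 * \<bar>x\<bar>) (\<theta> n * x\<^sup>2))"
  proof (intro always_eventually allI)
    fix n
    show "(1 - Re (char M (\<theta> n))) / \<theta> n \<le> 1 / 2 * expectation (\<lambda>x. min (4 * \<bar>x\<bar>) (\<theta> n * x\<^sup>2))"
      using one_minus_Re_char_le[OF int, of "\<theta> n"] \<theta>(2)[of n] by (simp add: field_simps)
  qed
qed simp
lemma (in real_distribution) stable_char_not_integrable:
  assumes \<kappa>: "0 < \<kappa>" and \<alpha>: "\<alpha> \<le> 1" and char: "\<And>\<theta>. char M \<theta> = exp (- (\<kappa> * \<bar>\<theta>\<bar> powr \<alpha>))"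
  shows "\<not> integrable M (\<lambda>x. x)"
proof
  assume int: "integrable M (\<lambda>x. x)"
  define \<theta> where "\<theta> n = 1 / (real n + 1)" for n
  have \<theta>: "0 < \<theta> n" "\<theta> n \<le> 1" for n
    by (auto simp: \<theta>_def field_simps)
  have "\<theta> \<longlonglongrightarrow> 0"
    unfolding \<theta>_def using LIMSEQ_inverse_real_of_nat by (simp add: inverse_eq_divide add.commute)
  then have lim: "(\<lambda>n. (1 - Re (char M (\<theta> n))) / \<theta> n) \<longlonglongrightarrow> 0"
    using one_minus_Re_char_over_tendsto_0[OF int] \<theta>(1) by blast
  have "\<kappa> / (1 + \<kappa>) \<le> (1 - Re (char M (\<theta> n))) / \<theta> n" for n
  proof -
    have "\<theta> n powr 1 \<le> \<theta> n powr \<alpha>"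
      using \<theta>[of n] \<alpha> by (intro powr_mono') auto
    then have "\<theta> n \<le> \<theta> n powr \<alpha>"
      using \<theta>[of n] by simp
    then have "1 - exp (- (\<kappa> * \<theta> n)) \<le> 1 - Re (char M (\<theta> n))"
      using \<theta>[of n] \<kappa> by (simp add: char)
    moreover have "\<kappa> * \<theta> n / (1 + \<kappa>) \<le> 1 - exp (- (\<kappa> * \<theta> n))"
    proof -
      have "\<kappa> * \<theta> n / (1 + \<kappa>) \<le> \<kappa> * \<theta> n / (1 + \<kappa> * \<theta> n)"
        using \<theta>[of n] \<kappa> by (intro divide_left_mono) (auto simp: mult_left_le add_pos_nonneg)
      also have "\<dots> = 1 - 1 / (1 + \<kappa> * \<theta> n)"
        using \<theta>[of n] \<kappa> add_pos_pos[of 1 "\<kappa> * \<theta> n"] by (simp add: divide_simps)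
      also have "\<dots> \<le> 1 - exp (- (\<kappa> * \<theta> n))"
        using exp_ge_add_one_self[of "\<kappa> * \<theta> n"] \<theta>[of n] \<kappa>
        by (simp add: exp_minus inverse_eq_divide frac_le add_pos_nonneg)
      finally show ?thesis .
    qed
    ultimately show ?thesis
      using \<theta>[of n] by (simp add: le_divide_eq)
  qed
  then have "\<kappa> / (1 + \<kappa>) \<le> 0"
    using lim by (intro LIMSEQ_le_const) auto
  with \<kappa> show False
    by (simp add: field_simps add_pos_nonneg)
qed
lemma (in real_distribution) integrable_min_abs_diff:
  assumes "0 \<le> L"
  shows "integrable M (\<lambda>x. min L \<bar>x - y\<bar>)"
    and "integrable M (\<lambda>y. \<integral>x. min L \<bar>x - y\<bar> \<partial>M)"
proof -
  have bound: "\<bar>min L \<bar>x - y\<bar>\<bar> \<le> L" for x y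
    using assms by auto
  show "integrable M (\<lambda>x. min L \<bar>x - y\<bar>)"
    using bound by (intro integrable_abs_le_const) auto
  show "integrable M (\<lambda>y. \<integral>x. min L \<bar>x - y\<bar> \<partial>M)"
    using bound by (intro integrable_abs_le_const abs_integral_le_const) auto
qed

lemma (in real_distribution) mean_min_dist_mono:
  assumes "0 \<le> L" "L \<le> L'"
  shows "(\<integral>y. \<integral>x. min L \<bar>x - y\<bar> \<partial>M \<partial>M) \<le> (\<integral>y. \<integral>x. min L' \<bar>x - y\<bar> \<partial>M \<partial>M)"
  using assms integrable_min_abs_diff[of L] integrable_min_abs_diff[of L']
  by (intro integral_mono) auto

lemma (in real_distribution) mean_min_dist_unbounded:
  assumes not_int: "\<not> integrable M (\<lambda>x. x)"
  shows "\<exists>L\<ge>0. B < (\<integral>y. \<integral>x. min L \<bar>x - y\<bar> \<partial>M \<partial>M)"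
proof (rule ccontr)
  assume "\<not> ?thesis"
  then have bounded: "(\<integral>y. \<integral>x. min (real n) \<bar>x - y\<bar> \<partial>M \<partial>M) \<le> B" for n
    by (metis not_le of_nat_0_le_iff)
  define h where "h n y = (\<integral>x. min (real n) \<bar>x - y\<bar> \<partial>M)" for n :: nat and y
  have h_measurable [measurable]: "h n \<in> borel_measurable M" for n
    unfolding h_def by measurable
  have h_nonneg: "0 \<le> h n y" for n y
    unfolding h_def by (intro integral_nonneg_AE) auto
  have h_sup: "(SUP n. ennreal (h n y)) = (\<integral>\<^sup>+x. ennreal \<bar>x - y\<bar> \<partial>M)" for y
    unfolding h_def using integrable_min_abs_diff(1)
    by (simp add: nn_integral_eq_integral[symmetric] nn_integral_SUP_min)
  have "incseq (\<lambda>n y. ennreal (h n y))"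
    unfolding h_def using integrable_min_abs_diff(1)
    by (intro incseq_SucI le_funI ennreal_leI integral_mono) auto
  then have "(\<integral>\<^sup>+y. (\<integral>\<^sup>+x. ennreal \<bar>x - y\<bar> \<partial>M) \<partial>M) = (SUP n. \<integral>\<^sup>+y. ennreal (h n y) \<partial>M)"
    unfolding h_sup[symmetric] by (intro nn_integral_monotone_convergence_SUP) measurable
  also have "\<dots> \<le> ennreal B"
  proof (rule SUP_least)
    fix n
    have "(\<integral>\<^sup>+y. ennreal (h n y) \<partial>M) = ennreal (\<integral>y. h n y \<partial>M)"
      unfolding h_def using integrable_min_abs_diff(2) h_nonneg
      by (intro nn_integral_eq_integral) (auto simp: h_def)
    then show "(\<integral>\<^sup>+y. ennreal (h n y) \<partial>M) \<le> ennreal B"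
      using bounded[of n] by (simp add: h_def ennreal_leI)
  qed
  finally have "AE y in M. (\<integral>\<^sup>+x. ennreal \<bar>x - y\<bar> \<partial>M) \<noteq> \<infinity>"
    by (intro nn_integral_PInf_AE) (auto simp: top_unique)
  moreover have "\<not> (AE y in M. False)"
    by (simp add: AE_False)
  ultimately obtain y where "(\<integral>\<^sup>+x. ennreal \<bar>x - y\<bar> \<partial>M) \<noteq> \<infinity>"
    by (metis (mono_tags, lifting) eventually_mono)
  then have "integrable M (\<lambda>x. x - y)"
    by (intro integrableI_bounded) (auto simp: top.not_eq_extremum)
  then have "integrable M (\<lambda>x. (x - y) + y)"
    by (rule Bochner_Integration.integrable_add) simp
  with not_int show False
    by simp
qed

lemma (in real_distribution) mean_min_dist_at_top:
  assumes "\<not> integrable M (\<lambda>x. x)"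
  shows "filterlim (\<lambda>L. \<integral>y. \<integral>x. min L \<bar>x - y\<bar> \<partial>M \<partial>M) at_top at_top"
  unfolding filterlim_at_top
proof
  fix B
  obtain L where "0 \<le> L" "B < (\<integral>y. \<integral>x. min L \<bar>x - y\<bar> \<partial>M \<partial>M)"
    using mean_min_dist_unbounded[OF assms] by blast
  then show "\<forall>\<^sub>F L' in at_top. B \<le> (\<integral>y. \<integral>x. min L' \<bar>x - y\<bar> \<partial>M \<partial>M)"
    using mean_min_dist_mono[of L] by (intro eventually_at_top_linorderI[of L]) force
qed

lemma lattice_points_in_interval:
  fixes a lo hi :: real assumes "0 < a"
  shows "finite {j::int. lo \<le> a * j \<and> a * j \<le> hi}"
    and "real (card {j::int. lo \<le> a * j \<and> a * j \<le> hi}) \<le> max 0 ((hi - lo) / a) + 1"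
    and "(hi - lo) / a - 1 \<le> real (card {j::int. lo \<le> a * j \<and> a * j \<le> hi})"
proof -
  let ?S = "{j::int. lo \<le> a * j \<and> a * j \<le> hi}"
  have "lo \<le> a * j \<longleftrightarrow> lo / a \<le> j" "a * j \<le> hi \<longleftrightarrow> j \<le> hi / a" for j :: int
    using assms by (simp_all add: field_simps)
  then have S: "?S = {\<lceil>lo / a\<rceil>..\<lfloor>hi / a\<rfloor>}"
    by (auto simp: ceiling_le_iff le_floor_iff)
  then show "finite ?S" by simp
  have card: "real (card ?S) = real (nat (\<lfloor>hi / a\<rfloor> - \<lceil>lo / a\<rceil> + 1))"
    unfolding S by simp
  have f: "real_of_int \<lfloor>hi / a\<rfloor> \<le> hi / a" "hi / a - 1 < real_of_int \<lfloor>hi / a\<rfloor>"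
    "lo / a \<le> real_of_int \<lceil>lo / a\<rceil>" "real_of_int \<lceil>lo / a\<rceil> < lo / a + 1"
    by linarith+
  have d: "(hi - lo) / a = hi / a - lo / a"
    by (simp add: diff_divide_distrib)
  show "real (card ?S) \<le> max 0 ((hi - lo) / a) + 1"
  proof (cases "\<lfloor>hi / a\<rfloor> - \<lceil>lo / a\<rceil> + 1 \<ge> 0")
    case True
    then show ?thesis
      unfolding card d using f by (simp add: of_nat_nat) linarith
  qed (simp add: card)
  show "(hi - lo) / a - 1 \<le> real (card ?S)"
  proof (cases "\<lfloor>hi / a\<rfloor> - \<lceil>lo / a\<rceil> + 1 \<ge> 0")
    case True
    then show ?thesis
      unfolding card d using f by (simp add: of_nat_nat) linarith
  next
    case False
    then show ?thesis
      unfolding card d using f by simp linarith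
  qed
qed

definition window :: "nat \<Rightarrow> int set" where
  "window J = {- int J..int J}"

lemma finite_window [simp]: "finite (window J)"
  by (simp add: window_def)

lemma window_mono: "J \<le> J' \<Longrightarrow> window J \<subseteq> window J'"
  by (auto simp: window_def)

lemma eventually_subset_window:
  assumes "finite (S :: int set)"
  shows "\<forall>\<^sub>F J in sequentially. S \<subseteq> window J"
proof -
  obtain B where "\<forall>j\<in>S. \<bar>j\<bar> \<le> B"
    using assms finite_int_iff_bounded_le by (metis image_subset_iff atMost_iff)
  then show ?thesis
    by (intro eventually_sequentiallyI[of "nat B"]) (force simp: window_def abs_le_iff)
qed

lemma card_inter_window_tendsto:
  assumes "finite (S :: int set)"
  shows "(\<lambda>J. real (card (S \<inter> window J))) \<longlonglongrightarrow> real (card S)"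
  using eventually_subset_window[OF assms]
  by (intro tendsto_eventually) (auto elim!: eventually_mono simp: Int_absorb2)

lemma card_inter_window_unbounded:
  assumes "infinite (S :: int set)"
  shows "\<exists>J. B < real (card (S \<inter> window J))"
proof -
  obtain F where F: "F \<subseteq> S" "finite F" "card F = nat \<lceil>B\<rceil> + 1"
    using infinite_arbitrarily_large[OF assms] by blast
  obtain J where "F \<subseteq> window J"
    using eventually_subset_window[OF F(2)] by (metis eventually_sequentially order.refl)
  then have "card F \<le> card (S \<inter> window J)"
    using F by (intro card_mono) auto
  then show ?thesis
    using F by (intro exI[of _ J]) linarith
qed

section \<open>A lattice displaced by independent jumps\<close>

(* Site j of the lattice a(j - \<epsilon>) is moved by D j; the D j are i.i.d. with law \<mu> and independent of \<epsilon>.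
   count UNIV L is the number of displaced sites in [0, L]. *)
locale displaced_lattice = prob_space M for M :: "'a measure" +
  fixes D :: "int \<Rightarrow> 'a \<Rightarrow> real" and \<epsilon> :: "'a \<Rightarrow> real" and a :: real and \<mu> :: "real measure"
  assumes a_pos: "0 < a"
    and measurable_D [measurable]: "\<And>j. D j \<in> borel_measurable M"
    and measurable_\<epsilon> [measurable]: "\<epsilon> \<in> borel_measurable M"
    and distr_D: "\<And>j. distr M borel (D j) = \<mu>"
    and indep: "indep_vars (\<lambda>_. borel) (\<lambda>i. case i of None \<Rightarrow> \<epsilon> | Some j \<Rightarrow> D j) UNIV"
begin

sublocale \<mu>: real_distribution \<mu>
  unfolding distr_D[of 0, symmetric] by simp

definition \<nu> :: "real measure" where
  "\<nu> = distr M borel \<epsilon>"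

sublocale \<nu>: real_distribution \<nu>
  unfolding \<nu>_def by simp

lemma integral_D:
  fixes g :: "real \<Rightarrow> 'b::{banach, second_countable_topology}"
  assumes [measurable]: "g \<in> borel_measurable borel"
  shows "(\<integral>\<omega>. g (D j \<omega>) \<partial>M) = integral\<^sup>L \<mu> g"
  by (simp add: integral_distr flip: distr_D[of j])

definition rv :: "int option \<Rightarrow> 'a \<Rightarrow> real" where
  "rv i = (case i of None \<Rightarrow> \<epsilon> | Some j \<Rightarrow> D j)"

lemma measurable_rv [measurable]: "rv i \<in> borel_measurable M"
  by (cases i) (simp_all add: rv_def)

lemma indep_rv: "indep_vars (\<lambda>_. borel) rv UNIV"
  using indep by (simp add: rv_def[abs_def])

lemma integral_prod_D:
  fixes g :: "int \<Rightarrow> real \<Rightarrow> 'b::{real_normed_field, banach, second_countable_topology}"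
  assumes "finite T" and [measurable]: "\<And>j. g j \<in> borel_measurable borel"
    and bounded: "\<And>j x. norm (g j x) \<le> B"
  shows "(\<integral>\<omega>. (\<Prod>j\<in>T. g j (D j \<omega>)) \<partial>M) = (\<Prod>j\<in>T. integral\<^sup>L \<mu> (g j))"
proof -
  define G where "G i = (case i of None \<Rightarrow> (\<lambda>_. 1) | Some j \<Rightarrow> g j)" for i
  have [measurable]: "G i \<in> borel_measurable borel" for i
    by (cases i) (simp_all add: G_def)
  have "indep_vars (\<lambda>_. borel) (\<lambda>i \<omega>. G i (rv i \<omega>)) (Some ` T)"
    by (rule indep_vars_compose2[OF indep_vars_subset[OF indep_rv]]) simp_all
  moreover have "integrable M (\<lambda>\<omega>. G i (rv i \<omega>))" for i
  proof (rule integrable_const_bound[where B = "max 1 B"])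
    show "AE x in M. norm (G i (rv i x)) \<le> max 1 B"
      using bounded by (cases i) (auto simp: G_def intro: le_max_iff_disj[THEN iffD2])
  qed simp
  ultimately have "(\<integral>\<omega>. (\<Prod>i\<in>Some ` T. G i (rv i \<omega>)) \<partial>M) = (\<Prod>i\<in>Some ` T. \<integral>\<omega>. G i (rv i \<omega>) \<partial>M)"
    using assms(1) by (intro indep_vars_lebesgue_integral) auto
  moreover have "(\<lambda>\<omega>. \<Prod>i\<in>Some ` T. G i (rv i \<omega>)) = (\<lambda>\<omega>. \<Prod>j\<in>T. g j (D j \<omega>))"
    by (simp add: prod.reindex G_def rv_def)
  moreover have "(\<Prod>i\<in>Some ` T. \<integral>\<omega>. G i (rv i \<omega>) \<partial>M) = (\<Prod>j\<in>T. integral\<^sup>L \<mu> (g j))"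
    by (simp add: prod.reindex G_def rv_def integral_D)
  ultimately show ?thesis
    by simp
qed

lemma integral_condition_\<epsilon>:
  fixes H :: "real \<Rightarrow> (int \<Rightarrow> real) \<Rightarrow> 'b::{banach, second_countable_topology}"
  assumes [measurable]: "(\<lambda>(e, x). H e x) \<in> borel_measurable (borel \<Otimes>\<^sub>M Pi\<^sub>M T (\<lambda>_. borel))"
    and bounded: "\<And>e x. norm (H e x) \<le> B"
  shows "(\<integral>\<omega>. H (\<epsilon> \<omega>) (\<lambda>j\<in>T. D j \<omega>) \<partial>M) = (\<integral>e. (\<integral>\<omega>. H e (\<lambda>j\<in>T. D j \<omega>) \<partial>M) \<partial>\<nu>)"
proof -
  let ?S1 = "Pi\<^sub>M {None} (\<lambda>_. borel) :: (int option \<Rightarrow> real) measure"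
  let ?S2 = "Pi\<^sub>M (Some ` T) (\<lambda>_. borel) :: (int option \<Rightarrow> real) measure"
  let ?V1 = "\<lambda>\<omega>. \<lambda>i\<in>{None}. rv i \<omega>"
  let ?V2 = "\<lambda>\<omega>. \<lambda>i\<in>Some ` T. rv i \<omega>"
  let ?P1 = "distr M ?S1 ?V1" and ?P2 = "distr M ?S2 ?V2"
  let ?H = "\<lambda>(f, g). H (f None) (\<lambda>j\<in>T. g (Some j))"
  have [measurable]: "?H \<in> borel_measurable (?S1 \<Otimes>\<^sub>M ?S2)"
    using measurable_comp[of "\<lambda>(f, g). (f None, \<lambda>j\<in>T. g (Some j))" _ "borel \<Otimes>\<^sub>M Pi\<^sub>M T (\<lambda>_. borel)"]
    by (simp add: comp_def case_prod_beta)
  interpret P1: prob_space ?P1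
    by (rule prob_space_distr) simp
  interpret P2: prob_space ?P2
    by (rule prob_space_distr) simp
  interpret P12: pair_prob_space ?P1 ?P2 ..
  have prod: "?P1 \<Otimes>\<^sub>M ?P2 = distr M (?S1 \<Otimes>\<^sub>M ?S2) (\<lambda>\<omega>. (?V1 \<omega>, ?V2 \<omega>))"
    using indep_var_restrict[OF indep_rv, of "{None}" "Some ` T"]
    unfolding indep_var_distribution_eq by blast
  have V: "?H (f, ?V2 \<omega>) = H (f None) (\<lambda>j\<in>T. D j \<omega>)" for f \<omega>
    by (simp add: rv_def cong: restrict_cong)
  have "(\<integral>\<omega>. H (\<epsilon> \<omega>) (\<lambda>j\<in>T. D j \<omega>) \<partial>M) = (\<integral>\<omega>. ?H (?V1 \<omega>, ?V2 \<omega>) \<partial>M)"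
    by (simp only: V) (simp add: rv_def)
  also have "\<dots> = integral\<^sup>L (distr M (?S1 \<Otimes>\<^sub>M ?S2) (\<lambda>\<omega>. (?V1 \<omega>, ?V2 \<omega>))) ?H"
    by (subst integral_distr) auto
  also have "\<dots> = integral\<^sup>L (?P1 \<Otimes>\<^sub>M ?P2) ?H"
    unfolding prod ..
  also have "\<dots> = (\<integral>f. (\<integral>g. ?H (f, g) \<partial>?P2) \<partial>?P1)"
    using bounded by (intro P12.integral_fst'[symmetric] P12.P.integrable_const_bound[where B = B]) auto
  also have "\<dots> = (\<integral>f. (\<integral>\<omega>. H (f None) (\<lambda>j\<in>T. D j \<omega>) \<partial>M) \<partial>?P1)"
  proof (intro Bochner_Integration.integral_cong refl)
    fix f
    have "(\<integral>g. ?H (f, g) \<partial>?P2) = (\<integral>\<omega>. ?H (f, ?V2 \<omega>) \<partial>M)"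
      by (subst integral_distr) auto
    then show "(\<integral>g. ?H (f, g) \<partial>?P2) = (\<integral>\<omega>. H (f None) (\<lambda>j\<in>T. D j \<omega>) \<partial>M)"
      by (simp only: V)
  qed
  also have "\<dots> = (\<integral>\<omega>'. (\<integral>\<omega>. H (\<epsilon> \<omega>') (\<lambda>j\<in>T. D j \<omega>) \<partial>M) \<partial>M)"
    by (subst integral_distr) (auto simp: rv_def[of None])
  also have "\<dots> = (\<integral>e. (\<integral>\<omega>. H e (\<lambda>j\<in>T. D j \<omega>) \<partial>M) \<partial>\<nu>)"
    unfolding \<nu>_def by (subst integral_distr) auto
  finally show ?thesis .
qed

definition lands :: "real \<Rightarrow> real \<Rightarrow> int \<Rightarrow> real \<Rightarrow> bool" where
  "lands L e j x \<longleftrightarrow> x + a * (real_of_int j - e) \<in> {0..L}"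

lemma measurable_lands [measurable]:
  assumes [measurable]: "f \<in> borel_measurable N" "g \<in> borel_measurable N"
  shows "Measurable.pred N (\<lambda>w. lands L (g w) j (f w))"
  unfolding lands_def by measurable

definition hits :: "int set \<Rightarrow> real \<Rightarrow> real \<Rightarrow> real \<Rightarrow> real" where
  "hits T L e x = real (card {j\<in>T. lands L e j x})"

definition hits2 :: "int set \<Rightarrow> real \<Rightarrow> real \<Rightarrow> real \<Rightarrow> real \<Rightarrow> real" where
  "hits2 T L e x y = real (card {j\<in>T. lands L e j x \<and> lands L e j y})"

lemma lands_eq_lattice_points:
  "{j. lands L e j x} = {j::int. a * e - x \<le> a * j \<and> a * j \<le> a * e - x + L}"
  "{j. lands L e j x \<and> lands L e j y} =
     {j::int. max (a * e - x) (a * e - y) \<le> a * j \<and> a * j \<le> min (a * e - x + L) (a * e - y + L)}"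
  by (auto simp: lands_def algebra_simps)

lemma hits_UNIV: "hits UNIV L e x = real (card {j. lands L e j x})"
  and hits2_UNIV: "hits2 UNIV L e x y = real (card {j. lands L e j x \<and> lands L e j y})"
  by (simp_all add: hits_def hits2_def)

lemma finite_lands: "finite {j. lands L e j x}"
  unfolding lands_eq_lattice_points by (rule lattice_points_in_interval(1)[OF a_pos])

lemma hits_UNIV_approx:
  assumes "0 \<le> L"
  shows "\<bar>hits UNIV L e x - L / a\<bar> \<le> 1"
proof -
  have "hits UNIV L e x \<le> max 0 ((a * e - x + L - (a * e - x)) / a) + 1"
    unfolding hits_UNIV lands_eq_lattice_points by (rule lattice_points_in_interval(2)[OF a_pos])
  moreover have "(a * e - x + L - (a * e - x)) / a - 1 \<le> hits UNIV L e x"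
    unfolding hits_UNIV lands_eq_lattice_points by (rule lattice_points_in_interval(3)[OF a_pos])
  ultimately show ?thesis
    using assms a_pos by (simp add: abs_le_iff)
qed

lemma hits2_UNIV_approx: "\<bar>hits2 UNIV L e x y - max 0 (L - \<bar>x - y\<bar>) / a\<bar> \<le> 1"
proof -
  have d: "min (a * e - x + L) (a * e - y + L) - max (a * e - x) (a * e - y) = L - \<bar>x - y\<bar>"
    by (auto simp: min_def max_def abs_if)
  have m: "max 0 ((L - \<bar>x - y\<bar>) / a) = max 0 (L - \<bar>x - y\<bar>) / a"
    using a_pos by (auto simp: max_def divide_le_0_iff zero_le_divide_iff)
  have "hits2 UNIV L e x y \<le> max 0 ((min (a * e - x + L) (a * e - y + L) - max (a * e - x) (a * e - y)) / a) + 1"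
    unfolding hits2_UNIV lands_eq_lattice_points by (rule lattice_points_in_interval(2)[OF a_pos])
  moreover have "(min (a * e - x + L) (a * e - y + L) - max (a * e - x) (a * e - y)) / a - 1 \<le> hits2 UNIV L e x y"
    unfolding hits2_UNIV lands_eq_lattice_points by (rule lattice_points_in_interval(3)[OF a_pos])
  moreover have "0 \<le> hits2 UNIV L e x y"
    by (simp add: hits2_def)
  ultimately show ?thesis
    unfolding d m[symmetric] by (auto simp: max_def abs_le_iff)
qed

lemma hits_le:
  assumes "0 \<le> L"
  shows "hits T L e x \<le> L / a + 1"
proof -
  have "hits T L e x \<le> hits UNIV L e x"
    unfolding hits_def by (auto intro!: card_mono finite_lands)
  then show ?thesis
    using hits_UNIV_approx[OF assms, of e x] by linarith
qed

lemma hits2_le: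
  assumes "0 \<le> L"
  shows "hits2 T L e x y \<le> L / a + 1"
proof -
  have "hits2 T L e x y \<le> hits UNIV L e x"
    unfolding hits_def hits2_def by (auto intro!: card_mono finite_lands)
  then show ?thesis
    using hits_le[OF assms, of UNIV e x] by linarith
qed

lemma hits_window_tendsto: "(\<lambda>J. hits (window J) L e x) \<longlonglongrightarrow> hits UNIV L e x"
proof -
  have "{j \<in> window J. lands L e j x} = {j. lands L e j x} \<inter> window J" for J
    by auto
  then show ?thesis
    unfolding hits_def using card_inter_window_tendsto[OF finite_lands] by simp
qed

lemma hits2_window_tendsto: "(\<lambda>J. hits2 (window J) L e x y) \<longlonglongrightarrow> hits2 UNIV L e x y"
proof -
  have "{j \<in> window J. lands L e j x \<and> lands L e j y} = {j. lands L e j x \<and> lands L e j y} \<inter> window J" for J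
    by auto
  moreover have "finite {j. lands L e j x \<and> lands L e j y}"
    using finite_lands by (rule finite_subset[rotated]) auto
  ultimately show ?thesis
    unfolding hits2_def using card_inter_window_tendsto by simp
qed

lemma hits_eq_sum: "finite T \<Longrightarrow> hits T L e x = (\<Sum>j\<in>T. of_bool (lands L e j x))"
  by (auto simp: hits_def Int_def intro!: arg_cong[where f = card])

lemma hits2_eq_sum:
  "finite T \<Longrightarrow> hits2 T L e x y = (\<Sum>j\<in>T. of_bool (lands L e j x \<and> lands L e j y))"
  by (auto simp: hits2_def Int_def intro!: arg_cong[where f = card])

lemma measurable_hits [measurable]:
  assumes [measurable]: "f \<in> borel_measurable N" "g \<in> borel_measurable N"
  shows "(\<lambda>w. hits (window J) L (g w) (f w)) \<in> borel_measurable N"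
    and "(\<lambda>w. hits UNIV L (g w) (f w)) \<in> borel_measurable N"
proof -
  show window: "(\<lambda>w. hits (window J) L (g w) (f w)) \<in> borel_measurable N" for J
    unfolding hits_eq_sum[OF finite_window] by measurable
  show "(\<lambda>w. hits UNIV L (g w) (f w)) \<in> borel_measurable N"
    by (rule borel_measurable_LIMSEQ_real[where u = "\<lambda>J w. hits (window J) L (g w) (f w)"])
      (simp_all add: hits_window_tendsto window)
qed

lemma measurable_hits2 [measurable]:
  assumes [measurable]: "f \<in> borel_measurable N" "f' \<in> borel_measurable N" "g \<in> borel_measurable N"
  shows "(\<lambda>w. hits2 (window J) L (g w) (f w) (f' w)) \<in> borel_measurable N"
    and "(\<lambda>w. hits2 UNIV L (g w) (f w) (f' w)) \<in> borel_measurable N"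
proof -
  show window: "(\<lambda>w. hits2 (window J) L (g w) (f w) (f' w)) \<in> borel_measurable N" for J
    unfolding hits2_eq_sum[OF finite_window] by measurable
  show "(\<lambda>w. hits2 UNIV L (g w) (f w) (f' w)) \<in> borel_measurable N"
    by (rule borel_measurable_LIMSEQ_real[where u = "\<lambda>J w. hits2 (window J) L (g w) (f w) (f' w)"])
      (simp_all add: hits2_window_tendsto window)
qed

definition hit_prob :: "real \<Rightarrow> real \<Rightarrow> int \<Rightarrow> real" where
  "hit_prob L e j = measure \<mu> {x. lands L e j x}"

lemma hit_prob_nonneg: "0 \<le> hit_prob L e j"
  and hit_prob_le_1: "hit_prob L e j \<le> 1"
  by (simp_all add: hit_prob_def)

lemma hit_prob_eq_integral: "hit_prob L e j = (\<integral>x. of_bool (lands L e j x) \<partial>\<mu>)"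
proof -
  have "(\<integral>x. of_bool (lands L e j x) \<partial>\<mu>) = integral\<^sup>L \<mu> (indicator {x. lands L e j x})"
    by (intro Bochner_Integration.integral_cong) (auto simp: indicator_def)
  also have "\<dots> = hit_prob L e j"
    unfolding hit_prob_def by (subst Bochner_Integration.integral_indicator) auto
  finally show ?thesis ..
qed

lemma measurable_hit_prob [measurable]: "(\<lambda>e. hit_prob L e j) \<in> borel_measurable borel"
  unfolding hit_prob_eq_integral by measurable

lemma sum_hit_prob_eq_integral:
  assumes "finite T"
  shows "(\<Sum>j\<in>T. hit_prob L e j) = (\<integral>x. hits T L e x \<partial>\<mu>)"
  using assms unfolding hit_prob_eq_integral hits_eq_sum[OF assms]
  by (intro Bochner_Integration.integral_sum[symmetric] \<mu>.integrable_abs_le_const[where B = 1]) auto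

lemma sum_hit_prob_sq_eq_integral:
  assumes "finite T"
  shows "(\<Sum>j\<in>T. (hit_prob L e j)\<^sup>2) = (\<integral>y. \<integral>x. hits2 T L e x y \<partial>\<mu> \<partial>\<mu>)"
proof -
  let ?I = "\<lambda>j x. of_bool (lands L e j x) :: real"
  have integrable: "integrable \<mu> (\<lambda>x. ?I j x * ?I j y)" "integrable \<mu> (\<lambda>y. \<integral>x. ?I j x * ?I j y \<partial>\<mu>)" for j y
    by (intro \<mu>.integrable_abs_le_const[where B = 1] \<mu>.abs_integral_le_const; simp)+
  have "(hit_prob L e j)\<^sup>2 = (\<integral>y. \<integral>x. ?I j x * ?I j y \<partial>\<mu> \<partial>\<mu>)" for j
    by (simp add: hit_prob_eq_integral power2_eq_square mult.commute)
  then have "(\<Sum>j\<in>T. (hit_prob L e j)\<^sup>2) = (\<integral>y. (\<Sum>j\<in>T. \<integral>x. ?I j x * ?I j y \<partial>\<mu>) \<partial>\<mu>)"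
    using integrable by (simp add: Bochner_Integration.integral_sum)
  also have "\<dots> = (\<integral>y. \<integral>x. (\<Sum>j\<in>T. ?I j x * ?I j y) \<partial>\<mu> \<partial>\<mu>)"
    using integrable by (simp add: Bochner_Integration.integral_sum)
  also have "\<dots> = (\<integral>y. \<integral>x. hits2 T L e x y \<partial>\<mu> \<partial>\<mu>)"
    by (simp add: hits2_eq_sum[OF assms] of_bool_conj)
  finally show ?thesis .
qed

(* These are \<Sum>\<^sub>j hit_prob L e j and \<Sum>\<^sub>j (hit_prob L e j)\<^sup>2 (sum_hit_prob_tendsto, sum_hit_prob_sq_tendsto);
   as \<mu>-integrals of lattice-point counts they are within O(1) of their leading terms. *)
definition hit_prob_sum :: "real \<Rightarrow> real \<Rightarrow> real" where
  "hit_prob_sum L e = (\<integral>x. hits UNIV L e x \<partial>\<mu>)"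

definition hit_prob_sq_sum :: "real \<Rightarrow> real \<Rightarrow> real" where
  "hit_prob_sq_sum L e = (\<integral>y. \<integral>x. hits2 UNIV L e x y \<partial>\<mu> \<partial>\<mu>)"

lemma measurable_hit_prob_sum [measurable]:
  "hit_prob_sum L \<in> borel_measurable borel" "hit_prob_sq_sum L \<in> borel_measurable borel"
  unfolding hit_prob_sum_def[abs_def] hit_prob_sq_sum_def[abs_def] by measurable

context
  fixes L :: real assumes L: "0 \<le> L"
begin

lemma sum_hit_prob_tendsto: "(\<lambda>J. \<Sum>j\<in>window J. hit_prob L e j) \<longlonglongrightarrow> hit_prob_sum L e"
  unfolding sum_hit_prob_eq_integral[OF finite_window] hit_prob_sum_def
proof (rule integral_dominated_convergence[where w = "\<lambda>_. L / a + 1"])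
  show "AE x in \<mu>. norm (hits (window J) L e x) \<le> L / a + 1" for J
    using hits_le[OF L] by (simp add: hits_def)
qed (simp_all add: hits_window_tendsto)

lemma sum_hit_prob_sq_tendsto: "(\<lambda>J. \<Sum>j\<in>window J. (hit_prob L e j)\<^sup>2) \<longlonglongrightarrow> hit_prob_sq_sum L e"
  unfolding sum_hit_prob_sq_eq_integral[OF finite_window] hit_prob_sq_sum_def
proof (rule integral_dominated_convergence[where w = "\<lambda>_. L / a + 1"])
  have bound: "\<bar>hits2 T L e x y\<bar> \<le> L / a + 1" for T x y
    using hits2_le[OF L] by (simp add: hits2_def)
  show "AE y in \<mu>. (\<lambda>J. \<integral>x. hits2 (window J) L e x y \<partial>\<mu>) \<longlonglongrightarrow> (\<integral>x. hits2 UNIV L e x y \<partial>\<mu>)"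
    using bound
    by (intro AE_I2 integral_dominated_convergence[where w = "\<lambda>_. L / a + 1"])
      (simp_all add: hits2_window_tendsto)
  show "AE y in \<mu>. norm (\<integral>x. hits2 (window J) L e x y \<partial>\<mu>) \<le> L / a + 1" for J
    using bound by (intro AE_I2) (simp add: \<mu>.abs_integral_le_const)
qed simp_all

lemma hit_prob_sum_approx: "\<bar>hit_prob_sum L e - L / a\<bar> \<le> 1"
proof -
  have "hit_prob_sum L e - L / a = (\<integral>x. hits UNIV L e x - L / a \<partial>\<mu>)"
    using hits_le[OF L, of UNIV e] unfolding hit_prob_sum_def
    by (subst Bochner_Integration.integral_diff)
      (auto intro!: \<mu>.integrable_abs_le_const[where B = "L / a + 1"] simp: hits_def \<mu>.prob_space[unfolded \<mu>.space_eq_univ])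
  also have "\<bar>\<dots>\<bar> \<le> 1"
    using hits_UNIV_approx[OF L] by (intro \<mu>.abs_integral_le_const) auto
  finally show ?thesis .
qed

lemma hit_prob_sum_le: "hit_prob_sum L e \<le> L / a + 1"
  using hit_prob_sum_approx[of e] by (simp add: abs_le_iff)

lemma hit_prob_sq_sum_nonneg: "0 \<le> hit_prob_sq_sum L e"
  using sum_hit_prob_sq_tendsto by (rule LIMSEQ_le_const) (auto intro!: sum_nonneg)

lemma hit_prob_sq_sum_le: "hit_prob_sq_sum L e \<le> hit_prob_sum L e"
proof (rule LIMSEQ_le[OF sum_hit_prob_sq_tendsto sum_hit_prob_tendsto])
  show "\<exists>N. \<forall>J\<ge>N. (\<Sum>j\<in>window J. (hit_prob L e j)\<^sup>2) \<le> (\<Sum>j\<in>window J. hit_prob L e j)"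
    using hit_prob_nonneg hit_prob_le_1
    by (auto intro!: sum_mono simp: power2_eq_square mult_left_le_one_le)
qed

end

definition variance_approx :: "real \<Rightarrow> real" where
  "variance_approx L = (\<integral>y. \<integral>x. min L \<bar>x - y\<bar> \<partial>\<mu> \<partial>\<mu>) / a"

lemma hit_prob_sq_sum_approx:
  assumes L: "0 \<le> L"
  shows "\<bar>hit_prob_sq_sum L e - (L / a - variance_approx L)\<bar> \<le> 1"
proof -
  let ?f = "\<lambda>y. \<integral>x. hits2 UNIV L e x y \<partial>\<mu>"
  let ?g = "\<lambda>y. (L - (\<integral>x. min L \<bar>x - y\<bar> \<partial>\<mu>)) / a"
  have hits2_bound: "\<bar>hits2 UNIV L e x y\<bar> \<le> L / a + 1" for x y
    using hits2_le[OF L, of UNIV e x y] by (simp add: hits2_def)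
  have f: "integrable \<mu> (\<lambda>x. hits2 UNIV L e x y)" for y
    using hits2_bound by (intro \<mu>.integrable_abs_le_const) simp_all
  have "integrable \<mu> ?f"
  proof (rule \<mu>.integrable_abs_le_const)
    show "\<bar>?f y\<bar> \<le> L / a + 1" for y
      using hits2_bound by (intro \<mu>.abs_integral_le_const) simp_all
  qed measurable
  have g: "?g y = (\<integral>x. (L - min L \<bar>x - y\<bar>) / a \<partial>\<mu>)" for y
    using \<mu>.integrable_min_abs_diff(1)[OF L]
    by (simp add: \<mu>.prob_space[unfolded \<mu>.space_eq_univ])
  have pointwise: "\<bar>hits2 UNIV L e x y - (L - min L \<bar>x - y\<bar>) / a\<bar> \<le> 1" for x y
  proof -
    have "L - min L \<bar>x - y\<bar> = max 0 (L - \<bar>x - y\<bar>)"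
      by (simp add: max_def min_def)
    then show ?thesis
      using hits2_UNIV_approx[of L e x y] by simp
  qed
  have inner: "\<bar>?f y - ?g y\<bar> \<le> 1" for y
    unfolding g using \<mu>.integrable_min_abs_diff(1)[OF L] pointwise
    by (intro \<mu>.abs_integral_diff_le_const f) auto
  have approx_eq: "L / a - variance_approx L = (\<integral>y. ?g y \<partial>\<mu>)"
    using \<mu>.integrable_min_abs_diff(2)[OF L]
    by (simp add: variance_approx_def \<mu>.prob_space[unfolded \<mu>.space_eq_univ] diff_divide_distrib)
  moreover have "integrable \<mu> ?g"
    using \<mu>.integrable_min_abs_diff(2)[OF L] by simp
  ultimately show ?thesis
    unfolding hit_prob_sq_sum_def approx_eq
    using inner \<open>integrable \<mu> ?f\<close> by (intro \<mu>.abs_integral_diff_le_const) auto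
qed

lemma conditional_variance_approx:
  assumes "0 \<le> L"
  shows "\<bar>(hit_prob_sum L e - hit_prob_sq_sum L e) - variance_approx L\<bar> \<le> 2"
  using hit_prob_sum_approx[OF assms, of e] hit_prob_sq_sum_approx[OF assms, of e]
  by (simp add: abs_le_iff)

(* For infinite sets card gives 0; the set counted by count UNIV L is finite almost surely (AE_finite_lands). *)
definition count :: "int set \<Rightarrow> real \<Rightarrow> 'a \<Rightarrow> real" where
  "count T L \<omega> = real (card {j\<in>T. lands L (\<epsilon> \<omega>) j (D j \<omega>)})"

lemma count_eq_sum: "finite T \<Longrightarrow> count T L \<omega> = (\<Sum>j\<in>T. of_bool (lands L (\<epsilon> \<omega>) j (D j \<omega>)))"
  by (auto simp: count_def Int_def intro!: arg_cong[where f = card])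

lemma measurable_count_window [measurable]: "count (window J) L \<in> borel_measurable M"
  unfolding count_eq_sum[OF finite_window, abs_def] by measurable

lemma count_nonneg: "0 \<le> count T L \<omega>"
  by (simp add: count_def)

lemma count_window_mono: "J \<le> J' \<Longrightarrow> count (window J) L \<omega> \<le> count (window J') L \<omega>"
  unfolding count_def using window_mono[of J J']
  by (auto intro!: card_mono finite_subset[OF _ finite_window])

lemma count_window_le_card: "count (window J) L \<omega> \<le> real (card (window J))"
  unfolding count_def by (auto intro!: card_mono)

lemma count_window_tendsto:
  assumes "finite {j. lands L (\<epsilon> \<omega>) j (D j \<omega>)}"
  shows "(\<lambda>J. count (window J) L \<omega>) \<longlonglongrightarrow> count UNIV L \<omega>"
proof -
  have "{j\<in>window J. lands L (\<epsilon> \<omega>) j (D j \<omega>)} = {j. lands L (\<epsilon> \<omega>) j (D j \<omega>)} \<inter> window J" for J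
    by auto
  then show ?thesis
    unfolding count_def using card_inter_window_tendsto[OF assms] by simp
qed

lemma integral_indicator_lands: "(\<integral>\<omega>. of_bool (lands L e j (D j \<omega>)) \<partial>M) = hit_prob L e j"
proof -
  have "(\<lambda>x. of_bool (lands L e j x) :: real) \<in> borel_measurable borel"
    by measurable
  from integral_D[OF this] show ?thesis
    by (simp add: hit_prob_eq_integral)
qed

lemma integrable_indicator_lands: "integrable M (\<lambda>\<omega>. of_bool (lands L e j (D j \<omega>)) :: real)"
  by (intro integrable_const_bound[where B = 1]) auto

lemma integral_indicator_lands_pair:
  "(\<integral>\<omega>. of_bool (lands L e j (D j \<omega>)) * of_bool (lands L e k (D k \<omega>)) \<partial>M)
     = (if j = k then hit_prob L e j else hit_prob L e j * hit_prob L e k)"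
proof (cases "j = k")
  case False
  have "(\<integral>\<omega>. (\<Prod>i\<in>{j, k}. of_bool (lands L e i (D i \<omega>)) :: real) \<partial>M)
      = (\<Prod>i\<in>{j, k}. \<integral>x. of_bool (lands L e i x) \<partial>\<mu>)"
    by (rule integral_prod_D[where B = 1]) auto
  with False show ?thesis
    by (simp add: hit_prob_eq_integral)
qed (simp add: integral_indicator_lands flip: of_bool_conj)

lemma expectation_count:
  assumes "finite T"
  shows "expectation (count T L) = (\<integral>e. (\<Sum>j\<in>T. hit_prob L e j) \<partial>\<nu>)"
proof -
  let ?H = "\<lambda>e x. \<Sum>j\<in>T. of_bool (lands L e j (x j)) :: real"
  have "expectation (count T L) = (\<integral>\<omega>. ?H (\<epsilon> \<omega>) (\<lambda>j\<in>T. D j \<omega>) \<partial>M)"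
    by (intro Bochner_Integration.integral_cong) (simp_all add: count_eq_sum[OF assms])
  also have "\<dots> = (\<integral>e. (\<integral>\<omega>. ?H e (\<lambda>j\<in>T. D j \<omega>) \<partial>M) \<partial>\<nu>)"
  proof (rule integral_condition_\<epsilon>[where B = "real (card T)"])
    show "norm (?H e x) \<le> real (card T)" for e x
      using assms by (auto intro!: card_mono)
  qed measurable
  also have "\<dots> = (\<integral>e. (\<Sum>j\<in>T. hit_prob L e j) \<partial>\<nu>)"
    by (simp add: Bochner_Integration.integral_sum integrable_indicator_lands integral_indicator_lands)
  finally show ?thesis .
qed

lemma integral_sq_sum_indicator_lands:
  assumes "finite T"
  shows "(\<integral>\<omega>. (\<Sum>j\<in>T. of_bool (lands L e j (D j \<omega>)))\<^sup>2 \<partial>M)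
    = (\<Sum>j\<in>T. hit_prob L e j)\<^sup>2 + (\<Sum>j\<in>T. hit_prob L e j) - (\<Sum>j\<in>T. (hit_prob L e j)\<^sup>2)"
proof -
  let ?I = "\<lambda>j \<omega>. of_bool (lands L e j (D j \<omega>)) :: real"
  have integrable: "integrable M (\<lambda>\<omega>. ?I j \<omega> * ?I k \<omega>)" for j k
    by (intro integrable_const_bound[where B = 1]) auto
  have "(\<integral>\<omega>. (\<Sum>j\<in>T. ?I j \<omega>)\<^sup>2 \<partial>M) = (\<integral>\<omega>. (\<Sum>j\<in>T. \<Sum>k\<in>T. ?I j \<omega> * ?I k \<omega>) \<partial>M)"
    by (simp add: power2_eq_square sum_product)
  also have "\<dots> = (\<Sum>j\<in>T. \<Sum>k\<in>T. \<integral>\<omega>. ?I j \<omega> * ?I k \<omega> \<partial>M)"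
    using integrable by (simp add: Bochner_Integration.integral_sum)
  also have "\<dots> = (\<Sum>j\<in>T. \<Sum>k\<in>T. hit_prob L e j * hit_prob L e k
      + (if j = k then hit_prob L e j - (hit_prob L e j)\<^sup>2 else 0))"
    by (intro sum.cong refl) (simp add: integral_indicator_lands_pair power2_eq_square)
  also have "\<dots> = (\<Sum>j\<in>T. hit_prob L e j)\<^sup>2 + (\<Sum>j\<in>T. hit_prob L e j) - (\<Sum>j\<in>T. (hit_prob L e j)\<^sup>2)"
    using assms by (simp add: sum.distrib power2_eq_square sum_product sum_subtractf)
  finally show ?thesis .
qed

lemma expectation_count_sq:
  assumes "finite T"
  shows "expectation (\<lambda>\<omega>. (count T L \<omega>)\<^sup>2) = (\<integral>e. (\<Sum>j\<in>T. hit_prob L e j)\<^sup>2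
      + (\<Sum>j\<in>T. hit_prob L e j) - (\<Sum>j\<in>T. (hit_prob L e j)\<^sup>2) \<partial>\<nu>)"
proof -
  let ?H = "\<lambda>e x. (\<Sum>j\<in>T. of_bool (lands L e j (x j)))\<^sup>2 :: real"
  have "expectation (\<lambda>\<omega>. (count T L \<omega>)\<^sup>2) = (\<integral>\<omega>. ?H (\<epsilon> \<omega>) (\<lambda>j\<in>T. D j \<omega>) \<partial>M)"
    by (intro Bochner_Integration.integral_cong) (simp_all add: count_eq_sum[OF assms])
  also have "\<dots> = (\<integral>e. (\<integral>\<omega>. ?H e (\<lambda>j\<in>T. D j \<omega>) \<partial>M) \<partial>\<nu>)"
  proof (rule integral_condition_\<epsilon>[where B = "(real (card T))\<^sup>2"])
    show "norm (?H e x) \<le> (real (card T))\<^sup>2" for e x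
      using assms by (auto intro!: card_mono power_mono)
  qed measurable
  also have "\<dots> = (\<integral>e. (\<Sum>j\<in>T. hit_prob L e j)\<^sup>2
      + (\<Sum>j\<in>T. hit_prob L e j) - (\<Sum>j\<in>T. (hit_prob L e j)\<^sup>2) \<partial>\<nu>)"
    using integral_sq_sum_indicator_lands[OF assms] by simp
  finally show ?thesis .
qed

lemma integral_prod_indicator_lands:
  fixes z :: complex assumes "cmod z \<le> 1" "finite T"
  shows "(\<integral>\<omega>. (\<Prod>j\<in>T. if lands L e j (D j \<omega>) then z else 1) \<partial>M)
    = (\<Prod>j\<in>T. 1 + hit_prob L e j * (z - 1))"
proof -
  have "(\<integral>\<omega>. (\<Prod>j\<in>T. if lands L e j (D j \<omega>) then z else 1) \<partial>M)
      = (\<Prod>j\<in>T. \<integral>x. (if lands L e j x then z else 1) \<partial>\<mu>)"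
    using assms by (intro integral_prod_D[where B = 1]) auto
  also have "\<dots> = (\<Prod>j\<in>T. 1 + hit_prob L e j * (z - 1))"
  proof (intro prod.cong refl)
    fix j
    have "(\<integral>x. (if lands L e j x then z else 1) \<partial>\<mu>)
        = (\<integral>x. 1 + (z - 1) * complex_of_real (of_bool (lands L e j x)) \<partial>\<mu>)"
      by (intro Bochner_Integration.integral_cong) auto
    also have "\<dots> = 1 + (z - 1) * hit_prob L e j"
      by (subst Bochner_Integration.integral_add)
        (auto intro!: \<mu>.integrable_const_bound[where B = "cmod (z - 1)"]
          simp: norm_mult hit_prob_eq_integral \<mu>.prob_space[unfolded \<mu>.space_eq_univ])
    finally show "(\<integral>x. (if lands L e j x then z else 1) \<partial>\<mu>) = 1 + hit_prob L e j * (z - 1)"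
      by (simp add: mult.commute)
  qed
  finally show ?thesis .
qed

lemma integral_iexp_count:
  assumes "finite T"
  shows "(\<integral>\<omega>. iexp (u * count T L \<omega>) \<partial>M) = (\<integral>e. (\<Prod>j\<in>T. 1 + hit_prob L e j * (iexp u - 1)) \<partial>\<nu>)"
proof -
  let ?H = "\<lambda>e x. \<Prod>j\<in>T. if lands L e j (x j) then iexp u else 1"
  have "iexp (u * count T L \<omega>) = iexp u ^ card {j\<in>T. lands L (\<epsilon> \<omega>) j (D j \<omega>)}" for \<omega>
    by (simp add: count_def exp_of_nat_mult[symmetric] algebra_simps)
  then have "(\<integral>\<omega>. iexp (u * count T L \<omega>) \<partial>M) = (\<integral>\<omega>. ?H (\<epsilon> \<omega>) (\<lambda>j\<in>T. D j \<omega>) \<partial>M)"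
    using assms by (simp add: prod.If_cases Int_def conj_commute)
  also have "\<dots> = (\<integral>e. (\<integral>\<omega>. ?H e (\<lambda>j\<in>T. D j \<omega>) \<partial>M) \<partial>\<nu>)"
  proof (rule integral_condition_\<epsilon>[where B = 1])
    show "norm (?H e x) \<le> 1" for e x
      by (simp add: prod_norm[symmetric] prod_le_1)
  qed measurable
  also have "\<dots> = (\<integral>e. (\<Prod>j\<in>T. 1 + hit_prob L e j * (iexp u - 1)) \<partial>\<nu>)"
    using integral_prod_indicator_lands[OF _ assms, of "iexp u"] by simp
  finally show ?thesis .
qed

lemma finite_lands_if_count_window_bounded:
  assumes "\<And>J. count (window J) L \<omega> \<le> B"
  shows "finite {j. lands L (\<epsilon> \<omega>) j (D j \<omega>)}"
proof (rule ccontr)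
  assume "infinite {j. lands L (\<epsilon> \<omega>) j (D j \<omega>)}"
  then obtain J where "B < real (card ({j. lands L (\<epsilon> \<omega>) j (D j \<omega>)} \<inter> window J))"
    using card_inter_window_unbounded by blast
  moreover have "{j. lands L (\<epsilon> \<omega>) j (D j \<omega>)} \<inter> window J = {j\<in>window J. lands L (\<epsilon> \<omega>) j (D j \<omega>)}"
    by auto
  ultimately show False
    using assms[of J] by (simp add: count_def)
qed

lemma measurable_count_UNIV [measurable]: "count UNIV L \<in> borel_measurable M"
proof -
  let ?bounded = "\<lambda>\<omega>. \<exists>B::nat. \<forall>J. count (window J) L \<omega> \<le> real B"
  have [measurable]: "Measurable.pred M ?bounded"
    by measurable
  have "(\<lambda>J. if ?bounded \<omega> then count (window J) L \<omega> else 0) \<longlonglongrightarrow> count UNIV L \<omega>" for \<omega>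
  proof (cases "?bounded \<omega>")
    case True
    then obtain B :: nat where "\<And>J. count (window J) L \<omega> \<le> real B"
      by blast
    from count_window_tendsto[OF finite_lands_if_count_window_bounded[OF this]] True show ?thesis
      by simp
  next
    case False
    have "infinite {j. lands L (\<epsilon> \<omega>) j (D j \<omega>)}"
    proof
      assume "finite {j. lands L (\<epsilon> \<omega>) j (D j \<omega>)}"
      then have "?bounded \<omega>"
        by (intro exI[of _ "card {j. lands L (\<epsilon> \<omega>) j (D j \<omega>)}"] allI)
          (auto simp: count_def intro!: card_mono)
      with False show False ..
    qed
    then have "count UNIV L \<omega> = 0"
      by (simp add: count_def)
    with False show ?thesis
      by (simp only: if_False) simp
  qed
  then show ?thesis
    by (rule borel_measurable_LIMSEQ_real[where u = "\<lambda>J \<omega>. if ?bounded \<omega> then count (window J) L \<omega> else 0"])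
      measurable
qed

lemma sum_hit_prob_sq_bounds:
  "0 \<le> (\<Sum>j\<in>T. (hit_prob L e j)\<^sup>2)" "(\<Sum>j\<in>T. (hit_prob L e j)\<^sup>2) \<le> (\<Sum>j\<in>T. hit_prob L e j)"
proof -
  show "0 \<le> (\<Sum>j\<in>T. (hit_prob L e j)\<^sup>2)"
    by (intro sum_nonneg) simp
  have "(hit_prob L e j)\<^sup>2 \<le> hit_prob L e j" for j
    using hit_prob_nonneg[of L e j] hit_prob_le_1[of L e j] by (simp add: power2_eq_square mult_left_le_one_le)
  then show "(\<Sum>j\<in>T. (hit_prob L e j)\<^sup>2) \<le> (\<Sum>j\<in>T. hit_prob L e j)"
    by (intro sum_mono)
qed

context
  fixes L :: real assumes L: "0 \<le> L"
begin

lemma sum_hit_prob_window_bounds: "0 \<le> (\<Sum>j\<in>window J. hit_prob L e j)" "(\<Sum>j\<in>window J. hit_prob L e j) \<le> L / a + 1"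
proof -
  show "0 \<le> (\<Sum>j\<in>window J. hit_prob L e j)"
    by (intro sum_nonneg hit_prob_nonneg)
  have "\<bar>\<integral>x. hits (window J) L e x \<partial>\<mu>\<bar> \<le> L / a + 1"
  proof (rule \<mu>.abs_integral_le_const)
    show "\<bar>hits (window J) L e x\<bar> \<le> L / a + 1" for x
      using hits_le[OF L, of "window J" e x] by (simp add: hits_def)
  qed measurable
  then show "(\<Sum>j\<in>window J. hit_prob L e j) \<le> L / a + 1"
    by (simp add: sum_hit_prob_eq_integral)
qed

lemma expectation_count_window_le: "expectation (count (window J) L) \<le> L / a + 1"
  unfolding expectation_count[OF finite_window] using sum_hit_prob_window_bounds
  by (intro \<nu>.integral_le_const \<nu>.integrable_abs_le_const[where B = "L / a + 1"]) auto

lemma AE_finite_lands: "AE \<omega> in M. finite {j. lands L (\<epsilon> \<omega>) j (D j \<omega>)}"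
proof -
  have "incseq (\<lambda>J \<omega>. ennreal (count (window J) L \<omega>))"
    by (intro incseq_SucI le_funI ennreal_leI count_window_mono) simp
  then have "(\<integral>\<^sup>+\<omega>. (SUP J. ennreal (count (window J) L \<omega>)) \<partial>M) = (SUP J. \<integral>\<^sup>+\<omega>. count (window J) L \<omega> \<partial>M)"
    by (intro nn_integral_monotone_convergence_SUP) measurable
  also have "\<dots> \<le> ennreal (L / a + 1)"
  proof (rule SUP_least)
    fix J
    have "integrable M (count (window J) L)"
      using count_window_le_card count_nonneg by (intro integrable_abs_le_const) auto
    then show "(\<integral>\<^sup>+\<omega>. count (window J) L \<omega> \<partial>M) \<le> ennreal (L / a + 1)"
      using expectation_count_window_le
      by (simp add: nn_integral_eq_integral count_nonneg ennreal_leI)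
  qed
  finally have "AE \<omega> in M. (SUP J. ennreal (count (window J) L \<omega>)) \<noteq> \<infinity>"
    by (intro nn_integral_PInf_AE) (auto simp: top_unique)
  then show ?thesis
  proof (rule AE_mp, intro AE_I2 impI)
    fix \<omega> assume "(SUP J. ennreal (count (window J) L \<omega>)) \<noteq> \<infinity>"
    then obtain B where "(SUP J. ennreal (count (window J) L \<omega>)) = ennreal B" "0 \<le> B"
      by (cases "SUP J. ennreal (count (window J) L \<omega>)") auto
    then have "count (window J) L \<omega> \<le> B" for J
      by (metis SUP_upper UNIV_I ennreal_le_iff)
    then show "finite {j. lands L (\<epsilon> \<omega>) j (D j \<omega>)}"
      by (rule finite_lands_if_count_window_bounded)
  qed
qed

lemma count_window_AE_tendsto: "AE \<omega> in M. (\<lambda>J. count (window J) L \<omega>) \<longlonglongrightarrow> count UNIV L \<omega>"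
  using AE_finite_lands by eventually_elim (rule count_window_tendsto)

lemma integrable_hit_prob_sums:
  "integrable \<nu> (hit_prob_sum L)" "integrable \<nu> (hit_prob_sq_sum L)"
  "integrable \<nu> (\<lambda>e. (hit_prob_sum L e)\<^sup>2)"
proof -
  have m: "\<bar>hit_prob_sum L e\<bar> \<le> L / a + 1" for e
    using hit_prob_sum_approx[OF L, of e] divide_nonneg_pos[OF L a_pos] by (simp add: abs_le_iff)
  have q: "\<bar>hit_prob_sq_sum L e\<bar> \<le> L / a + 1" for e
    using hit_prob_sq_sum_nonneg[OF L, of e] hit_prob_sq_sum_le[OF L, of e] m[of e] by (simp add: abs_le_iff)
  show "integrable \<nu> (hit_prob_sum L)"
    using m by (rule \<nu>.integrable_abs_le_const[rotated]) measurable
  show "integrable \<nu> (hit_prob_sq_sum L)"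
    using q by (rule \<nu>.integrable_abs_le_const[rotated]) measurable
  show "integrable \<nu> (\<lambda>e. (hit_prob_sum L e)\<^sup>2)"
  proof (rule \<nu>.integrable_abs_le_const[where B = "(L / a + 1)\<^sup>2"])
    show "\<bar>(hit_prob_sum L e)\<^sup>2\<bar> \<le> (L / a + 1)\<^sup>2" for e
      using power_mono[OF m[of e] abs_ge_zero, of 2] by simp
  qed measurable
qed

lemma expectation_count_UNIV:
  "integrable M (count UNIV L)" "expectation (count UNIV L) = (\<integral>e. hit_prob_sum L e \<partial>\<nu>)"
proof -
  have lim: "(\<lambda>J. expectation (count (window J) L)) \<longlonglongrightarrow> (\<integral>e. hit_prob_sum L e \<partial>\<nu>)"
    unfolding expectation_count[OF finite_window]
  proof (rule integral_dominated_convergence[where w = "\<lambda>_. L / a + 1"])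
    show "AE e in \<nu>. norm (\<Sum>j\<in>window J. hit_prob L e j) \<le> L / a + 1" for J
      using sum_hit_prob_window_bounds by simp
  qed (simp_all add: sum_hit_prob_tendsto[OF L])
  have int: "integrable M (count (window J) L)" for J
    using count_window_le_card count_nonneg by (intro integrable_abs_le_const) auto
  have mono: "AE \<omega> in M. mono (\<lambda>J. count (window J) L \<omega>)"
    by (intro AE_I2 monoI count_window_mono)
  show "integrable M (count UNIV L)" "expectation (count UNIV L) = (\<integral>e. hit_prob_sum L e \<partial>\<nu>)"
    using integral_monotone_convergence_nonneg[OF int mono _ count_window_AE_tendsto lim]
    by (simp_all add: count_nonneg)
qed

lemma expectation_count_UNIV_sq:
  "integrable M (\<lambda>\<omega>. (count UNIV L \<omega>)\<^sup>2)"
  "expectation (\<lambda>\<omega>. (count UNIV L \<omega>)\<^sup>2)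
     = (\<integral>e. (hit_prob_sum L e)\<^sup>2 + hit_prob_sum L e - hit_prob_sq_sum L e \<partial>\<nu>)"
proof -
  have lim: "(\<lambda>J. expectation (\<lambda>\<omega>. (count (window J) L \<omega>)\<^sup>2))
      \<longlonglongrightarrow> (\<integral>e. (hit_prob_sum L e)\<^sup>2 + hit_prob_sum L e - hit_prob_sq_sum L e \<partial>\<nu>)"
    unfolding expectation_count_sq[OF finite_window]
  proof (rule integral_dominated_convergence[where w = "\<lambda>_. (L / a + 1)\<^sup>2 + (L / a + 1)"])
    show "AE e in \<nu>. (\<lambda>J. (\<Sum>j\<in>window J. hit_prob L e j)\<^sup>2 + (\<Sum>j\<in>window J. hit_prob L e j)
        - (\<Sum>j\<in>window J. (hit_prob L e j)\<^sup>2))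
        \<longlonglongrightarrow> (hit_prob_sum L e)\<^sup>2 + hit_prob_sum L e - hit_prob_sq_sum L e"
      by (intro AE_I2 tendsto_intros sum_hit_prob_tendsto[OF L] sum_hit_prob_sq_tendsto[OF L])
    show "AE e in \<nu>. norm ((\<Sum>j\<in>window J. hit_prob L e j)\<^sup>2 + (\<Sum>j\<in>window J. hit_prob L e j)
        - (\<Sum>j\<in>window J. (hit_prob L e j)\<^sup>2)) \<le> (L / a + 1)\<^sup>2 + (L / a + 1)" for J
    proof (rule AE_I2)
      fix e
      let ?m = "\<Sum>j\<in>window J. hit_prob L e j" and ?q = "\<Sum>j\<in>window J. (hit_prob L e j)\<^sup>2"
      have "0 \<le> ?q" "?q \<le> ?m"
        by (rule sum_hit_prob_sq_bounds)+
      moreover have "?m\<^sup>2 \<le> (L / a + 1)\<^sup>2"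
        using sum_hit_prob_window_bounds by (intro power_mono) auto
      ultimately show "norm (?m\<^sup>2 + ?m - ?q) \<le> (L / a + 1)\<^sup>2 + (L / a + 1)"
        using sum_hit_prob_window_bounds[where J = J and e = e] zero_le_power2[of ?m]
        unfolding real_norm_def abs_le_iff by (intro conjI) linarith+
    qed
  qed simp_all
  have int: "integrable M (\<lambda>\<omega>. (count (window J) L \<omega>)\<^sup>2)" for J
    using count_window_le_card count_nonneg
    by (intro integrable_abs_le_const[where B = "(real (card (window J)))\<^sup>2"]) (auto intro!: power_mono)
  have mono: "AE \<omega> in M. mono (\<lambda>J. (count (window J) L \<omega>)\<^sup>2)"
    by (intro AE_I2 monoI power_mono count_window_mono count_nonneg)
  have tendsto: "AE \<omega> in M. (\<lambda>J. (count (window J) L \<omega>)\<^sup>2) \<longlonglongrightarrow> (count UNIV L \<omega>)\<^sup>2"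
    using count_window_AE_tendsto by eventually_elim (rule tendsto_power)
  show "integrable M (\<lambda>\<omega>. (count UNIV L \<omega>)\<^sup>2)"
    "expectation (\<lambda>\<omega>. (count UNIV L \<omega>)\<^sup>2)
       = (\<integral>e. (hit_prob_sum L e)\<^sup>2 + hit_prob_sum L e - hit_prob_sq_sum L e \<partial>\<nu>)"
    using integral_monotone_convergence_nonneg[OF int mono _ tendsto lim] by simp_all
qed

lemma variance_count_UNIV:
  "variance (count UNIV L) = (\<integral>e. hit_prob_sum L e - hit_prob_sq_sum L e \<partial>\<nu>)
     + ((\<integral>e. (hit_prob_sum L e)\<^sup>2 \<partial>\<nu>) - (\<integral>e. hit_prob_sum L e \<partial>\<nu>)\<^sup>2)"
proof -
  have "(\<integral>e. (hit_prob_sum L e)\<^sup>2 + hit_prob_sum L e - hit_prob_sq_sum L e \<partial>\<nu>)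
      = (\<integral>e. (hit_prob_sum L e)\<^sup>2 \<partial>\<nu>) + (\<integral>e. hit_prob_sum L e - hit_prob_sq_sum L e \<partial>\<nu>)"
    using Bochner_Integration.integral_add[OF integrable_hit_prob_sums(3)
        Bochner_Integration.integrable_diff[OF integrable_hit_prob_sums(1,2)]]
    by (simp add: add_diff_eq)
  then show ?thesis
    using variance_eq[OF expectation_count_UNIV(1) expectation_count_UNIV_sq(1)]
    unfolding expectation_count_UNIV(2) expectation_count_UNIV_sq(2) by simp
qed

lemma char_count_UNIV_limit:
  "(\<lambda>J. \<integral>e. (\<Prod>j\<in>window J. 1 + hit_prob L e j * (iexp u - 1)) \<partial>\<nu>)
     \<longlonglongrightarrow> (\<integral>\<omega>. iexp (u * count UNIV L \<omega>) \<partial>M)"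
  unfolding integral_iexp_count[OF finite_window, symmetric]
proof (rule integral_dominated_convergence[where w = "\<lambda>_. 1"])
  show "AE \<omega> in M. (\<lambda>J. iexp (u * count (window J) L \<omega>)) \<longlonglongrightarrow> iexp (u * count UNIV L \<omega>)"
    using count_window_AE_tendsto by eventually_elim (intro tendsto_intros)
  show "AE \<omega> in M. norm (iexp (u * count (window J) L \<omega>)) \<le> 1" for J
    by simp
qed auto

end

lemma variance_count_approx:
  assumes L: "0 \<le> L"
  shows "\<bar>variance (count UNIV L) - variance_approx L\<bar> \<le> 3"
proof -
  have gap: "0 \<le> (\<integral>e. (hit_prob_sum L e)\<^sup>2 \<partial>\<nu>) - (\<integral>e. hit_prob_sum L e \<partial>\<nu>)\<^sup>2"
    "(\<integral>e. (hit_prob_sum L e)\<^sup>2 \<partial>\<nu>) - (\<integral>e. hit_prob_sum L e \<partial>\<nu>)\<^sup>2 \<le> 1"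
    using hit_prob_sum_approx[OF L] by (intro \<nu>.second_moment_gap_bounds[where K = "L / a"]; simp)+
  have "\<bar>(\<integral>e. hit_prob_sum L e - hit_prob_sq_sum L e \<partial>\<nu>) - (\<integral>e. variance_approx L \<partial>\<nu>)\<bar> \<le> 2"
    using conditional_variance_approx[OF L] integrable_hit_prob_sums[OF L]
    by (intro \<nu>.abs_integral_diff_le_const) auto
  then show ?thesis
    unfolding variance_count_UNIV[OF L] using gap by (simp add: \<nu>.prob_space[unfolded \<nu>.space_eq_univ])
qed

lemma variance_count_at_top:
  assumes "\<not> integrable \<mu> (\<lambda>x. x)"
  shows "filterlim (\<lambda>L. variance (count UNIV L)) at_top at_top"
  unfolding filterlim_at_top
proof
  fix B
  have "\<forall>\<^sub>F L in at_top. (B + 3) * a \<le> (\<integral>y. \<integral>x. min L \<bar>x - y\<bar> \<partial>\<mu> \<partial>\<mu>)"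
    using \<mu>.mean_min_dist_at_top[OF assms] by (simp add: filterlim_at_top)
  moreover have "\<forall>\<^sub>F L in at_top. (0::real) \<le> L"
    by (rule eventually_ge_at_top)
  ultimately show "\<forall>\<^sub>F L in at_top. B \<le> variance (count UNIV L)"
  proof eventually_elim
    case (elim L)
    then have "B + 3 \<le> variance_approx L"
      using a_pos by (simp add: variance_approx_def pos_le_divide_eq)
    then show ?case
      using variance_count_approx[OF elim(2)] by (simp add: abs_le_iff)
  qed
qed

context
  fixes L u \<theta> K :: real assumes L: "0 \<le> L" and u: "\<bar>u\<bar> \<le> 1"
begin

lemma char_error_bounded:
  assumes q: "0 \<le> q" "q \<le> m" and m: "m \<le> L / a + 1"
  shows "\<bar>char_error u \<theta> K m q\<bar> \<le> (L / a + 1) + (L / a + 1 + \<bar>K\<bar>) + (L / a + 1 + \<theta>\<^sup>2) / 2"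
proof -
  have u3: "\<bar>u\<bar> ^ 3 \<le> 1" and u2: "u\<^sup>2 \<le> 1"
    using u by (simp_all add: power_le_one abs_square_le_1)
  have t1: "\<bar>u\<bar> ^ 3 * (m - q) \<le> L / a + 1"
    using u3 q m mult_mono[of "\<bar>u\<bar> ^ 3" 1 "m - q" "L / a + 1"] by simp
  have t2: "\<bar>u\<bar> * \<bar>m - K\<bar> \<le> L / a + 1 + \<bar>K\<bar>"
    using u q m mult_mono[of "\<bar>u\<bar>" 1 "\<bar>m - K\<bar>" "L / a + 1 + \<bar>K\<bar>"] by simp
  have t3: "\<bar>u\<^sup>2 * (m - q) - \<theta>\<^sup>2\<bar> \<le> L / a + 1 + \<theta>\<^sup>2"
  proof -
    have "0 \<le> u\<^sup>2 * (m - q)" "u\<^sup>2 * (m - q) \<le> L / a + 1"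
      using u2 q m mult_mono[of "u\<^sup>2" 1 "m - q" "L / a + 1"] by simp_all
    then show ?thesis
      unfolding abs_le_iff using zero_le_power2[of \<theta>] by linarith
  qed
  have "0 \<le> char_error u \<theta> K m q"
    unfolding char_error_def using q by simp
  moreover have "char_error u \<theta> K m q \<le> (L / a + 1) + (L / a + 1 + \<bar>K\<bar>) + (L / a + 1 + \<theta>\<^sup>2) / 2"
    unfolding char_error_def using add_mono[OF add_mono[OF t1 t2] divide_right_mono[OF t3, of 2]] by simp
  ultimately show ?thesis
    by simp
qed

lemma char_window_error:
  "cmod (iexp (- (u * K)) * (\<integral>e. (\<Prod>j\<in>window J. 1 + hit_prob L e j * (iexp u - 1)) \<partial>\<nu>) - exp (- (\<theta>\<^sup>2 / 2)))
     \<le> (\<integral>e. char_error u \<theta> K (\<Sum>j\<in>window J. hit_prob L e j) (\<Sum>j\<in>window J. (hit_prob L e j)\<^sup>2) \<partial>\<nu>)"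
proof -
  let ?\<Phi> = "\<lambda>e. \<Prod>j\<in>window J. 1 + hit_prob L e j * (iexp u - 1)"
  let ?m = "\<lambda>e. \<Sum>j\<in>window J. hit_prob L e j" and ?q = "\<lambda>e. \<Sum>j\<in>window J. (hit_prob L e j)\<^sup>2"
  let ?d = "\<lambda>e. iexp (- (u * K)) * ?\<Phi> e - exp (- (\<theta>\<^sup>2 / 2))"
  have \<Phi>_bound: "cmod (?\<Phi> e) \<le> 1" for e
    by (simp add: prod_norm[symmetric] prod_le_1 norm_bernoulli_char_le_1 hit_prob_nonneg hit_prob_le_1)
  have "integrable \<nu> ?\<Phi>"
    using \<Phi>_bound by (intro \<nu>.integrable_const_bound[where B = 1]) auto
  then have "cmod (iexp (- (u * K)) * integral\<^sup>L \<nu> ?\<Phi> - exp (- (\<theta>\<^sup>2 / 2))) = cmod (integral\<^sup>L \<nu> ?d)"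
    by (simp add: \<nu>.prob_space[unfolded \<nu>.space_eq_univ])
  also have "\<dots> \<le> (\<integral>e. cmod (?d e) \<partial>\<nu>)"
    by (rule integral_norm_bound)
  also have "\<dots> \<le> (\<integral>e. char_error u \<theta> K (?m e) (?q e) \<partial>\<nu>)"
  proof (rule integral_mono)
    show "integrable \<nu> (\<lambda>e. char_error u \<theta> K (?m e) (?q e))"
      using char_error_bounded[OF sum_hit_prob_sq_bounds sum_hit_prob_window_bounds(2)[OF L]]
      by (intro \<nu>.integrable_abs_le_const) measurable
    have "cmod (?d e) \<le> 2" for e
    proof -
      have "cmod (?d e) \<le> cmod (?\<Phi> e) + exp (- (\<theta>\<^sup>2 / 2))"
        using norm_triangle_ineq4[of "iexp (- (u * K)) * ?\<Phi> e" "complex_of_real (exp (- (\<theta>\<^sup>2 / 2)))"]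
        by (simp add: norm_mult)
      moreover have "exp (- (\<theta>\<^sup>2 / 2)) \<le> 1"
        by simp
      ultimately show ?thesis
        using \<Phi>_bound[of e] by linarith
    qed
    then show "integrable \<nu> (\<lambda>e. cmod (?d e))"
      by (intro \<nu>.integrable_const_bound[where B = 2]) auto
    fix e
    have "(\<Sum>j\<in>window J. hit_prob L e j * (1 - hit_prob L e j)) = ?m e - ?q e"
      by (simp add: power2_eq_square algebra_simps sum_subtractf)
    then show "cmod (?d e) \<le> char_error u \<theta> K (?m e) (?q e)"
      using bernoulli_sum_char_normal_approx[where p = "hit_prob L e" and T = "window J" and K = K and \<theta> = \<theta>,
          OF finite_window hit_prob_nonneg hit_prob_le_1 u]
      by (simp add: char_error_def)
  qed
  finally show ?thesis .
qed

lemma integrable_char_error: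
  "integrable \<nu> (\<lambda>e. char_error u \<theta> K (hit_prob_sum L e) (hit_prob_sq_sum L e))"
  using char_error_bounded[OF hit_prob_sq_sum_nonneg[OF L] hit_prob_sq_sum_le[OF L] hit_prob_sum_le[OF L]]
  by (intro \<nu>.integrable_abs_le_const) measurable

lemma char_count_error:
  "cmod (iexp (- (u * K)) * (\<integral>\<omega>. iexp (u * count UNIV L \<omega>) \<partial>M) - exp (- (\<theta>\<^sup>2 / 2)))
     \<le> (\<integral>e. char_error u \<theta> K (hit_prob_sum L e) (hit_prob_sq_sum L e) \<partial>\<nu>)"
proof (rule LIMSEQ_le)
  show "(\<lambda>J. cmod (iexp (- (u * K)) * (\<integral>e. (\<Prod>j\<in>window J. 1 + hit_prob L e j * (iexp u - 1)) \<partial>\<nu>)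
      - exp (- (\<theta>\<^sup>2 / 2)))) \<longlonglongrightarrow> cmod (iexp (- (u * K)) * (\<integral>\<omega>. iexp (u * count UNIV L \<omega>) \<partial>M) - exp (- (\<theta>\<^sup>2 / 2)))"
    by (intro tendsto_intros char_count_UNIV_limit[OF L])
  show "(\<lambda>J. \<integral>e. char_error u \<theta> K (\<Sum>j\<in>window J. hit_prob L e j) (\<Sum>j\<in>window J. (hit_prob L e j)\<^sup>2) \<partial>\<nu>)
      \<longlonglongrightarrow> (\<integral>e. char_error u \<theta> K (hit_prob_sum L e) (hit_prob_sq_sum L e) \<partial>\<nu>)"
  proof (rule integral_dominated_convergence[where w = "\<lambda>_. (L / a + 1) + (L / a + 1 + \<bar>K\<bar>) + (L / a + 1 + \<theta>\<^sup>2) / 2"])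
    show "AE e in \<nu>. (\<lambda>J. char_error u \<theta> K (\<Sum>j\<in>window J. hit_prob L e j) (\<Sum>j\<in>window J. (hit_prob L e j)\<^sup>2))
        \<longlonglongrightarrow> char_error u \<theta> K (hit_prob_sum L e) (hit_prob_sq_sum L e)"
      unfolding char_error_def
      by (intro AE_I2 tendsto_intros sum_hit_prob_tendsto[OF L] sum_hit_prob_sq_tendsto[OF L]) simp
    show "AE e in \<nu>. norm (char_error u \<theta> K (\<Sum>j\<in>window J. hit_prob L e j) (\<Sum>j\<in>window J. (hit_prob L e j)\<^sup>2))
        \<le> (L / a + 1) + (L / a + 1 + \<bar>K\<bar>) + (L / a + 1 + \<theta>\<^sup>2) / 2" for J
      using char_error_bounded[OF sum_hit_prob_sq_bounds sum_hit_prob_window_bounds(2)[OF L]] by simp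
    show "(\<lambda>e. char_error u \<theta> K (\<Sum>j\<in>window J. hit_prob L e j) (\<Sum>j\<in>window J. (hit_prob L e j)\<^sup>2))
        \<in> borel_measurable \<nu>" for J
      by measurable
    show "(\<lambda>e. char_error u \<theta> K (hit_prob_sum L e) (hit_prob_sq_sum L e)) \<in> borel_measurable \<nu>"
      by measurable
  qed simp
  show "\<exists>N. \<forall>J\<ge>N. cmod (iexp (- (u * K)) * (\<integral>e. (\<Prod>j\<in>window J. 1 + hit_prob L e j * (iexp u - 1)) \<partial>\<nu>)
      - exp (- (\<theta>\<^sup>2 / 2))) \<le> (\<integral>e. char_error u \<theta> K (\<Sum>j\<in>window J. hit_prob L e j) (\<Sum>j\<in>window J. (hit_prob L e j)\<^sup>2) \<partial>\<nu>)"
    using char_window_error by blast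
qed

end

lemma char_normalized_count_approx:
  fixes L \<theta> :: real
  defines "V \<equiv> variance (count UNIV L)"
  defines "u \<equiv> \<theta> / sqrt V"
  assumes L: "0 \<le> L" and V: "5 \<le> V" "\<theta>\<^sup>2 \<le> V"
  shows "cmod (char (distr M borel (\<lambda>\<omega>. (count UNIV L \<omega> - L / a) / sqrt V)) \<theta> - exp (- (\<theta>\<^sup>2 / 2)))
    \<le> 2 * \<bar>u\<bar> * \<theta>\<^sup>2 + \<bar>u\<bar> + 5 * u\<^sup>2 / 2"
proof -
  have \<theta>: "\<theta>\<^sup>2 = u\<^sup>2 * V"
    using V by (simp add: u_def power_divide)
  have u: "\<bar>u\<bar> \<le> 1"
    using V \<theta> by (simp add: abs_square_le_1[symmetric] mult_le_cancel_right1)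
  have error: "char_error u \<theta> (L / a) (hit_prob_sum L e) (hit_prob_sq_sum L e)
      \<le> \<bar>u\<bar> ^ 3 * (V + 5) + \<bar>u\<bar> + 5 * u\<^sup>2 / 2" for e
  proof -
    have V_approx: "\<bar>(hit_prob_sum L e - hit_prob_sq_sum L e) - V\<bar> \<le> 5"
      using conditional_variance_approx[OF L, of e] variance_count_approx[OF L] by (simp add: V_def abs_le_iff)
    have "\<bar>u\<bar> ^ 3 * (hit_prob_sum L e - hit_prob_sq_sum L e) \<le> \<bar>u\<bar> ^ 3 * (V + 5)"
      using V_approx by (intro mult_left_mono) auto
    moreover have "\<bar>u\<bar> * \<bar>hit_prob_sum L e - L / a\<bar> \<le> \<bar>u\<bar>"
      using hit_prob_sum_approx[OF L, of e] mult_left_mono[of _ 1 "\<bar>u\<bar>"] by simp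
    moreover have "\<bar>u\<^sup>2 * (hit_prob_sum L e - hit_prob_sq_sum L e) - \<theta>\<^sup>2\<bar> \<le> u\<^sup>2 * 5"
      unfolding \<theta> using V_approx mult_left_mono[of _ 5 "u\<^sup>2"]
      by (simp add: abs_mult flip: right_diff_distrib)
    ultimately show ?thesis
      unfolding char_error_def by linarith
  qed
  have "sqrt V \<noteq> 0"
    using V by simp
  then have "char (distr M borel (\<lambda>\<omega>. (count UNIV L \<omega> - L / a) / sqrt V)) \<theta>
      = iexp (- (u * (L / a))) * (\<integral>\<omega>. iexp (u * count UNIV L \<omega>) \<partial>M)"
    by (simp add: char_distr_normalized u_def)
  then have "cmod (char (distr M borel (\<lambda>\<omega>. (count UNIV L \<omega> - L / a) / sqrt V)) \<theta> - exp (- (\<theta>\<^sup>2 / 2)))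
      \<le> (\<integral>e. char_error u \<theta> (L / a) (hit_prob_sum L e) (hit_prob_sq_sum L e) \<partial>\<nu>)"
    using char_count_error[OF L u, where K = "L / a" and \<theta> = \<theta>] by simp
  also have "\<dots> \<le> \<bar>u\<bar> ^ 3 * (V + 5) + \<bar>u\<bar> + 5 * u\<^sup>2 / 2"
    using error integrable_char_error[OF L u] by (intro \<nu>.integral_le_const) auto
  also have "\<bar>u\<bar> ^ 3 * (V + 5) \<le> \<bar>u\<bar> ^ 3 * (2 * V)"
    using V(1) by (intro mult_left_mono) auto
  also have "\<dots> = 2 * \<bar>u\<bar> * \<theta>\<^sup>2"
    unfolding \<theta> by (cases "0 \<le> u") (simp_all add: power2_eq_square power3_eq_cube)
  finally show ?thesis
    by simp
qed

theorem normalized_count_weak_conv_normal: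
  assumes no_mean: "\<not> integrable \<mu> (\<lambda>x. x)" and Ls: "filterlim Ls at_top sequentially"
  shows "weak_conv_m (\<lambda>n. distr M borel (\<lambda>\<omega>. (count UNIV (Ls n) \<omega> - Ls n / a)
      / sqrt (variance (count UNIV (Ls n))))) std_normal_distribution"
proof (rule levy_continuity)
  show "real_distribution (distr M borel (\<lambda>\<omega>. (count UNIV (Ls n) \<omega> - Ls n / a)
      / sqrt (variance (count UNIV (Ls n)))))" for n
    by (rule real_distribution_distr) measurable
  show "real_distribution std_normal_distribution"
    by (rule real_dist_normal_dist)
  fix \<theta> :: real
  define V where "V n = variance (count UNIV (Ls n))" for n
  define u where "u n = \<theta> / sqrt (V n)" for n
  let ?char = "\<lambda>n. char (distr M borel (\<lambda>\<omega>. (count UNIV (Ls n) \<omega> - Ls n / a) / sqrt (V n))) \<theta>"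
  let ?bound = "\<lambda>n. 2 * \<bar>u n\<bar> * \<theta>\<^sup>2 + \<bar>u n\<bar> + 5 * (u n)\<^sup>2 / 2"
  have V: "filterlim V at_top sequentially"
    unfolding V_def using filterlim_compose[OF variance_count_at_top[OF no_mean] Ls] .
  then have "u \<longlonglongrightarrow> 0"
    unfolding u_def
    by (intro tendsto_divide_0[OF tendsto_const] filterlim_at_top_imp_at_infinity
        filterlim_compose[OF sqrt_at_top])
  then have "?bound \<longlonglongrightarrow> 2 * \<bar>0\<bar> * \<theta>\<^sup>2 + \<bar>0\<bar> + 5 * 0\<^sup>2 / 2"
    by (intro tendsto_intros) simp_all
  then have bound_0: "?bound \<longlonglongrightarrow> 0"
    by simp
  have "\<forall>\<^sub>F n in sequentially. 0 \<le> Ls n" "\<forall>\<^sub>F n in sequentially. max 5 (\<theta>\<^sup>2) \<le> V n"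
    using Ls V unfolding filterlim_at_top by blast+
  then have "\<forall>\<^sub>F n in sequentially. 0 \<le> Ls n \<and> max 5 (\<theta>\<^sup>2) \<le> V n"
    by (rule eventually_conj)
  then have "\<forall>\<^sub>F n in sequentially. cmod (?char n - exp (- (\<theta>\<^sup>2 / 2))) \<le> ?bound n"
  proof eventually_elim
    case (elim n)
    then have "0 \<le> Ls n" "5 \<le> V n" "\<theta>\<^sup>2 \<le> V n"
      by simp_all
    then show ?case
      unfolding V_def u_def by (rule char_normalized_count_approx)
  qed
  then have "(\<lambda>n. cmod (?char n - exp (- (\<theta>\<^sup>2 / 2)))) \<longlonglongrightarrow> 0"
    by (intro tendsto_sandwich[OF _ _ tendsto_const bound_0]) simp_all
  then have "?char \<longlonglongrightarrow> exp (- (\<theta>\<^sup>2 / 2))"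
    by (rule LIM_zero_cancel[OF tendsto_norm_zero_cancel])
  then show "(\<lambda>n. char (distr M borel (\<lambda>\<omega>. (count UNIV (Ls n) \<omega> - Ls n / a)
      / sqrt (variance (count UNIV (Ls n))))) \<theta>) \<longlonglongrightarrow> char std_normal_distribution \<theta>"
    by (simp add: V_def char_std_normal_distribution)
qed

end

section \<open>Symmetric stable Levy processes\<close>

lemma sym_stable_levy_measurable:
  assumes "sym_stable_levy M X \<alpha> c"
  shows "X s \<in> borel_measurable M"
  using assms[unfolded sym_stable_levy_def, THEN conjunct2, THEN conjunct1] by simp

lemma sym_stable_levy_real_distribution:
  assumes "sym_stable_levy M X \<alpha> c"
  shows "real_distribution (distr M borel (X s))"
  using assms[unfolded sym_stable_levy_def, THEN conjunct1] sym_stable_levy_measurable[OF assms]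
  by (rule prob_space.real_distribution_distr)

lemma sym_stable_levy_char:
  assumes "sym_stable_levy M X \<alpha> c" "0 \<le> s"
  shows "char (distr M borel (X s)) \<theta> = exp (- (s * c * \<bar>\<theta>\<bar> powr \<alpha>))"
  using assms(1)[unfolded sym_stable_levy_def, THEN conjunct2, THEN conjunct2, THEN conjunct2,
      THEN conjunct2, THEN conjunct2] assms(2)
  by simp

lemma sym_stable_levy_distr_eq:
  assumes "sym_stable_levy M X \<alpha> c" "sym_stable_levy M Y \<alpha> c" "0 \<le> s"
  shows "distr M borel (X s) = distr M borel (Y s)"
  using sym_stable_levy_real_distribution[OF assms(1)] sym_stable_levy_real_distribution[OF assms(2)]
  by (rule Levy_uniqueness) (simp add: fun_eq_iff sym_stable_levy_char[OF assms(1,3)] sym_stable_levy_char[OF assms(2,3)])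

lemma sym_stable_levy_not_integrable:
  assumes "sym_stable_levy M X \<alpha> c" "0 < c" "\<alpha> \<le> 1" "0 < s"
  shows "\<not> integrable (distr M borel (X s)) (\<lambda>x. x)"
proof -
  interpret real_distribution "distr M borel (X s)"
    by (rule sym_stable_levy_real_distribution[OF assms(1)])
  show ?thesis
    using assms sym_stable_levy_char[OF assms(1)]
    by (intro stable_char_not_integrable[of "s * c" \<alpha>]) simp_all
qed

lemma sym_stable_levy_displaced_lattice:
  assumes "prob_space M" "0 < a" "0 \<le> t" "\<And>j. sym_stable_levy M (X j) \<alpha> c"
    and "\<epsilon> \<in> borel_measurable M"
    and "prob_space.indep_vars M (\<lambda>_. Pi\<^sub>M UNIV (\<lambda>_::real. borel))
           (\<lambda>i \<omega>. case i of None \<Rightarrow> (\<lambda>s. \<epsilon> \<omega>) | Some j \<Rightarrow> (\<lambda>s. X j s \<omega>)) UNIV"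
  shows "displaced_lattice M (\<lambda>j. X j t) \<epsilon> a (distr M borel (X 0 t))"
proof (intro displaced_lattice.intro displaced_lattice_axioms.intro)
  interpret prob_space M
    by fact
  show "X j t \<in> borel_measurable M" for j
    using assms(4) by (rule sym_stable_levy_measurable)
  show "distr M borel (X j t) = distr M borel (X 0 t)" for j
    using sym_stable_levy_distr_eq[OF assms(4,4,3)] .
  have "indep_vars (\<lambda>_. borel) (\<lambda>i \<omega>. (case i of None \<Rightarrow> (\<lambda>s. \<epsilon> \<omega>) | Some j \<Rightarrow> (\<lambda>s. X j s \<omega>)) t) UNIV"
    using assms(6) by (rule indep_vars_compose2) simp
  then show "indep_vars (\<lambda>_. borel) (\<lambda>i. case i of None \<Rightarrow> \<epsilon> | Some j \<Rightarrow> X j t) UNIV"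
    by (rule indep_vars_cong[THEN iffD1, rotated 3]) (auto simp: fun_eq_iff split: option.splits)
qed fact+

theorem proposition2p1:
  fixes M :: "'a measure" and X :: "int \<Rightarrow> real \<Rightarrow> 'a \<Rightarrow> real" and \<epsilon> :: "'a \<Rightarrow> real"
    and \<alpha> c a t :: real
  assumes "prob_space M"
    and "0 < \<alpha>" and "\<alpha> \<le> 1" and "0 < c" and "0 < a" and "0 < t"
    and "\<And>j. sym_stable_levy M (X j) \<alpha> c"
    and "\<epsilon> \<in> borel_measurable M"
    and "distr M borel \<epsilon> = uniform_measure lborel {0..1}"
    and "prob_space.indep_vars M (\<lambda>_. Pi\<^sub>M UNIV (\<lambda>_::real. borel))
           (\<lambda>i \<omega>. case i of None \<Rightarrow> (\<lambda>s. \<epsilon> \<omega>) | Some j \<Rightarrow> (\<lambda>s. X j s \<omega>)) (UNIV :: int option set)"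
  shows "\<forall>Ls :: nat \<Rightarrow> real. filterlim Ls at_top sequentially \<longrightarrow>
           weak_conv_m
             (\<lambda>n. distr M borel (\<lambda>\<omega>. (count_N X \<epsilon> a t (Ls n) \<omega> - Ls n / a)
                                        / sqrt (number_variance M X \<epsilon> a t (Ls n))))
             (density lborel std_normal_density)"
proof -
  interpret displaced_lattice M "\<lambda>j. X j t" \<epsilon> a "distr M borel (X 0 t)"
    using assms(1,5) less_imp_le[OF assms(6)] assms(7,8,10) by (rule sym_stable_levy_displaced_lattice)
  have count: "count_N X \<epsilon> a t L = count UNIV L" for L
    by (simp add: fun_eq_iff count_N_def count_def lands_def)
  have "number_variance M X \<epsilon> a t L = variance (count UNIV L)" for L
    unfolding number_variance_def count ..
  with count show ?thesis
    using normalized_count_weak_conv_normal[OF sym_stable_levy_not_integrable[OF assms(7,4,3,6)]]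
    by simp
qed

end
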